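(* In the setting of the context, let $J\in\mathbb{N}$ and $h:\mathbb{R}\times\{0,1\}\times\mathbb{R}^k\to\mathbb{R}^J$ be Borel measurable with $\mathbb{E}[\|h(Y(a),a,Z)\|_1]<\infty$ for each $a\in\{0,1\}$. Let $\eta_{ni}=h(Y_{ni},A_{ni},Z_i)$ and $\overline\eta_n=\frac1n\sum_{i=1}^n\eta_{ni}$. Then \[ \overline\eta_n\to\mathbb{E}[\pi(\mathbb{S}(Z))h(Y(1),1,Z)+(1-\pi(\mathbb{S}(Z)))h(Y(0),0,Z)]\quad\text{in probability.} \]
   Context: Population: $W=(Y(0),Y(1),Z')'\in\mathbb{R}^{2+k}$ with law $Q_0$ in a family $\mathbf{Q}$ of distributions each having a density w.r.t. a product of $\sigma$-finite measures and $\mathbb{E}_Q[Y(a)^2]<\infty$; $\mathbb{E}$ is under $Q_0$. Known measurable $\mathbb{S}:\mathbb{R}^k\to\{1,\dots,\mathcal{S}\}$ and $\pi(s)\in(0,1)$. $W_i=(Y_i(0),Y_i(1),Z_i)$ i.i.d. $Q_0$; treatments $\mathbf{A}_n=(A_{n1},\dots,A_{nn})\in\{0,1\}^n$; $S_i=\mathbb{S}(Z_i)$, $\mathbf{S}_n=(S_1,\dots,S_n)$; $Y_{ni}=Y_i(1)A_{ni}+Y_i(0)(1-A_{ni})$; $(W_1,\dots,W_n)$ and $\mathbf{A}_n$ conditionally independent given $\mathbf{S}_n$; $\Pr(\mathbf{A}_n=\mathbf{a}\mid\mathbf{S}_n=\mathbf{s})$ known and not depending on $Q_0$; $N_n(1,s)/N_n(s)\to\pi(s)$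 in probability for each $s$ ($N_n(s)=\sum_i\mathbb{I}\{S_i=s\}$, $N_n(a,s)=\sum_i\mathbb{I}\{A_{ni}=a,S_i=s\}$). *)

theory Defs
  imports "HOL-Probability.Probability"
begin

definition conv_in_prob :: "'a measure \<Rightarrow> (nat \<Rightarrow> 'a \<Rightarrow> 'b::metric_space) \<Rightarrow> 'b \<Rightarrow> bool" where
  "conv_in_prob M X c \<longleftrightarrow>
     (\<forall>e>0. (\<lambda>n. measure M {\<omega> \<in> space M. dist (X n \<omega>) c > e}) \<longlonglongrightarrow> 0)"

definition N_s :: "(nat \<Rightarrow> 'a \<Rightarrow> 'z) \<Rightarrow> ('z \<Rightarrow> nat) \<Rightarrow> nat \<Rightarrow> nat \<Rightarrow> 'a \<Rightarrow> nat" where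
  "N_s Z Sf n s \<omega> = card {i. i < n \<and> Sf (Z i \<omega>) = s}"

definition N_as :: "(nat \<Rightarrow> nat \<Rightarrow> 'a \<Rightarrow> nat) \<Rightarrow> (nat \<Rightarrow> 'a \<Rightarrow> 'z) \<Rightarrow> ('z \<Rightarrow> nat) \<Rightarrow> nat \<Rightarrow> nat \<Rightarrow> nat \<Rightarrow> 'a \<Rightarrow> nat" where
  "N_as A Z Sf n a s \<omega> = card {i. i < n \<and> A n i \<omega> = a \<and> Sf (Z i \<omega>) = s}"

text \<open>Conditional independence of (W_1,...,W_n) and A_n given the (discrete, finitely
  valued) stratum vector S_n: for every value s of S_n,
  P(W\<in>B, A=a, S=s) P(S=s) = P(W\<in>B, S=s) P(A=a, S=s).\<close>
definition cond_indep_strata ::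
  "'a measure \<Rightarrow> nat \<Rightarrow> (nat \<Rightarrow> 'a \<Rightarrow> 'w::topological_space) \<Rightarrow> (nat \<Rightarrow> 'a \<Rightarrow> nat)
     \<Rightarrow> (nat \<Rightarrow> 'a \<Rightarrow> nat) \<Rightarrow> bool" where
  "cond_indep_strata M n W An S \<longleftrightarrow>
     (\<forall>B \<in> sets (PiM {..<n} (\<lambda>_. borel)). \<forall>a s.
        measure M {\<omega> \<in> space M. restrict (\<lambda>i. W i \<omega>) {..<n} \<in> B
                      \<and> restrict (\<lambda>i. An i \<omega>) {..<n} = a \<and> restrict (\<lambda>i. S i \<omega>) {..<n} = s}
        * measure M {\<omega> \<in> space M. restrict (\<lambda>i. S i \<omega>) {..<n} = s}
      = measure M {\<omega> \<in> space M. restrict (\<lambda>i. W i \<omega>) {..<n} \<in> B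
                      \<and> restrict (\<lambda>i. S i \<omega>) {..<n} = s}
        * measure M {\<omega> \<in> space M. restrict (\<lambda>i. An i \<omega>) {..<n} = a
                      \<and> restrict (\<lambda>i. S i \<omega>) {..<n} = s})"

end

theory Submission
  imports Defs
begin

(*
  Given the strata, the assignment is independent of the i.i.d. data.  Hence, if u is a
  centred function of the data supported on a single stratum, the terms 1{A_ni = a} u(W_i)
  of the arm-a sample mean are pairwise uncorrelated, and after truncating u to a bounded
  function Chebyshev's inequality shows that their mean tends to 0 in probability.  Any
  integrable f supported on stratum s is such a u plus a multiple of the stratum indicator,
  whose arm-a mean is N_n(a,s)/n.  The weak law of large numbers gives N_n(s)/n -> P(S = s),
  hence by the balance condition N_n(1,s)/n -> pi(s) P(S = s) and
  N_n(0,s)/n -> (1 - pi(s)) P(S = s).  Summing over strata, arms and coordinates yields the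
  limit E[pi(S) h(Y(1),1,Z) + (1 - pi(S)) h(Y(0),0,Z)].
*)

section \<open>Convergence in probability\<close>

lemma conv_in_prob_if_dist_le_sum:
  fixes X :: "nat \<Rightarrow> 'a \<Rightarrow> 'b::metric_space" and U :: "'i \<Rightarrow> nat \<Rightarrow> 'a \<Rightarrow> 'c::metric_space"
  assumes "prob_space M" and K: "finite K"
    and conv: "\<And>k. k \<in> K \<Longrightarrow> conv_in_prob M (U k) (c k)"
    and meas: "\<And>k n. k \<in> K \<Longrightarrow> (\<lambda>\<omega>. dist (U k n \<omega>) (c k)) \<in> borel_measurable M"
    and C: "0 \<le> C"
    and bound: "\<And>n \<omega>. 0 < n \<Longrightarrow> \<omega> \<in> space M \<Longrightarrow>
                  dist (X n \<omega>) x \<le> C * (\<Sum>k\<in>K. dist (U k n \<omega>) (c k))"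
  shows "conv_in_prob M X x"
  unfolding conv_in_prob_def
proof (intro allI impI)
  interpret prob_space M by fact
  fix e :: real assume e: "0 < e"
  define d where "d = e / (C * card K + 1)"
  have "0 < C * card K + 1" using C by (simp add: add_nonneg_pos)
  then have d: "0 < d" and Cd: "C * (card K * d) < e"
    using e C by (auto simp: d_def field_simps)
  have sub: "{\<omega> \<in> space M. e < dist (X n \<omega>) x} \<subseteq> (\<Union>k\<in>K. {\<omega> \<in> space M. d < dist (U k n \<omega>) (c k)})"
    if "0 < n" for n
  proof safe
    fix \<omega> assume \<omega>: "\<omega> \<in> space M" "e < dist (X n \<omega>) x"
    show "\<omega> \<in> (\<Union>k\<in>K. {\<omega> \<in> space M. d < dist (U k n \<omega>) (c k)})"
    proof (rule ccontr)
      assume "\<not> ?thesis"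
      then have "(\<Sum>k\<in>K. dist (U k n \<omega>) (c k)) \<le> (\<Sum>k\<in>K. d)"
        by (intro sum_mono) (use \<omega> in auto)
      then have "C * (\<Sum>k\<in>K. dist (U k n \<omega>) (c k)) < e"
        using mult_left_mono[OF _ C] Cd by (metis order.strict_trans1 sum_constant mult.commute)
      with bound[OF that \<omega>(1)] \<omega>(2) show False by simp
    qed
  qed
  have le: "prob {\<omega> \<in> space M. e < dist (X n \<omega>) x}
      \<le> (\<Sum>k\<in>K. prob {\<omega> \<in> space M. d < dist (U k n \<omega>) (c k)})" if "0 < n" for n
  proof -
    have "prob {\<omega> \<in> space M. e < dist (X n \<omega>) x}
        \<le> prob (\<Union>k\<in>K. {\<omega> \<in> space M. d < dist (U k n \<omega>) (c k)})"
      by (rule finite_measure_mono[OF sub[OF that]]) (use K meas in auto)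
    also have "\<dots> \<le> (\<Sum>k\<in>K. prob {\<omega> \<in> space M. d < dist (U k n \<omega>) (c k)})"
      by (rule finite_measure_subadditive_finite) (use K meas in auto)
    finally show ?thesis .
  qed
  have lim: "(\<lambda>n. \<Sum>k\<in>K. prob {\<omega> \<in> space M. d < dist (U k n \<omega>) (c k)}) \<longlonglongrightarrow> 0"
    using conv d unfolding conv_in_prob_def by (auto intro!: tendsto_null_sum)
  show "(\<lambda>n. prob {\<omega> \<in> space M. e < dist (X n \<omega>) x}) \<longlonglongrightarrow> 0"
    by (rule tendsto_sandwich[OF _ _ tendsto_const lim])
       (use le in \<open>auto simp: eventually_sequentially intro!: exI[of _ 1]\<close>)
qed

lemma conv_in_prob_sum:
  fixes X :: "'i \<Rightarrow> nat \<Rightarrow> 'a \<Rightarrow> 'b::{real_normed_vector, second_countable_topology}"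
  assumes "prob_space M" and "finite K"
    and "\<And>k. k \<in> K \<Longrightarrow> conv_in_prob M (X k) (c k)"
    and "\<And>k n. k \<in> K \<Longrightarrow> X k n \<in> borel_measurable M"
  shows "conv_in_prob M (\<lambda>n \<omega>. \<Sum>k\<in>K. X k n \<omega>) (\<Sum>k\<in>K. c k)"
proof (rule conv_in_prob_if_dist_le_sum[where C=1])
  show "dist (\<Sum>k\<in>K. X k n \<omega>) (\<Sum>k\<in>K. c k) \<le> 1 * (\<Sum>k\<in>K. dist (X k n \<omega>) (c k))" for n \<omega>
    using dist_sum_le by simp
qed (use assms in simp_all)

lemma conv_in_prob_add:
  fixes X Y :: "nat \<Rightarrow> 'a \<Rightarrow> 'b::{real_normed_vector, second_countable_topology}"
  assumes "prob_space M" and "conv_in_prob M X c" and "conv_in_prob M Y d"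
    and "\<And>n. X n \<in> borel_measurable M" and "\<And>n. Y n \<in> borel_measurable M"
  shows "conv_in_prob M (\<lambda>n \<omega>. X n \<omega> + Y n \<omega>) (c + d)"
  using conv_in_prob_sum[OF assms(1), where K="{True, False}" and X="\<lambda>k. if k then X else Y"
      and c="\<lambda>k. if k then c else d"] assms(2-)
  by simp

lemma conv_in_prob_scaleR:
  fixes X :: "nat \<Rightarrow> 'a \<Rightarrow> 'b::{real_normed_vector, second_countable_topology}"
  assumes "prob_space M" and "conv_in_prob M X c" and "\<And>n. X n \<in> borel_measurable M"
  shows "conv_in_prob M (\<lambda>n \<omega>. r *\<^sub>R X n \<omega>) (r *\<^sub>R c)"
proof (rule conv_in_prob_if_dist_le_sum[where K="{()}" and U="\<lambda>_. X" and C="\<bar>r\<bar>"])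
  show "dist (r *\<^sub>R X n \<omega>) (r *\<^sub>R c) \<le> \<bar>r\<bar> * (\<Sum>k\<in>{()}. dist (X n \<omega>) c)" for n \<omega>
    by (simp add: dist_norm flip: scaleR_diff_right)
qed (use assms in simp_all)

lemma conv_in_prob_diff:
  fixes X Y :: "nat \<Rightarrow> 'a \<Rightarrow> 'b::{real_normed_vector, second_countable_topology}"
  assumes "prob_space M" and "conv_in_prob M X c" and "conv_in_prob M Y d"
    and "\<And>n. X n \<in> borel_measurable M" and "\<And>n. Y n \<in> borel_measurable M"
  shows "conv_in_prob M (\<lambda>n \<omega>. X n \<omega> - Y n \<omega>) (c - d)"
  using conv_in_prob_add[OF assms(1,2) conv_in_prob_scaleR[OF assms(1,3,5), of "-1"] assms(4)] assms(5)
  by simp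

lemma conv_in_prob_mult_bounded:
  fixes X Y :: "nat \<Rightarrow> 'a \<Rightarrow> real"
  assumes M: "prob_space M" and "conv_in_prob M X a" and "conv_in_prob M Y b"
    and "\<And>n. X n \<in> borel_measurable M" and "\<And>n. Y n \<in> borel_measurable M"
    and bounded: "\<And>n \<omega>. \<omega> \<in> space M \<Longrightarrow> \<bar>Y n \<omega>\<bar> \<le> B"
  shows "conv_in_prob M (\<lambda>n \<omega>. X n \<omega> * Y n \<omega>) (a * b)"
proof (rule conv_in_prob_if_dist_le_sum[OF M, where K="{True, False}" and U="\<lambda>k. if k then X else Y"
      and c="\<lambda>k. if k then a else b" and C="B + \<bar>a\<bar>"])
  obtain \<omega> where "\<omega> \<in> space M" using prob_space.not_empty[OF M] by blast
  then have B: "0 \<le> B" using bounded[of \<omega> 0] by linarith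
  then show "0 \<le> B + \<bar>a\<bar>" by simp
  fix n :: nat and \<omega> assume "\<omega> \<in> space M"
  have "X n \<omega> * Y n \<omega> - a * b = (X n \<omega> - a) * Y n \<omega> + a * (Y n \<omega> - b)"
    by (simp add: algebra_simps)
  then have "\<bar>X n \<omega> * Y n \<omega> - a * b\<bar> \<le> \<bar>X n \<omega> - a\<bar> * \<bar>Y n \<omega>\<bar> + \<bar>a\<bar> * \<bar>Y n \<omega> - b\<bar>"
    by (metis abs_mult abs_triangle_ineq)
  also have "\<dots> \<le> \<bar>X n \<omega> - a\<bar> * B + \<bar>a\<bar> * \<bar>Y n \<omega> - b\<bar>"
    using bounded[OF \<open>\<omega> \<in> space M\<close>] by (intro add_mono mult_left_mono) auto
  also have "\<dots> \<le> (B + \<bar>a\<bar>) * (\<bar>X n \<omega> - a\<bar> + \<bar>Y n \<omega> - b\<bar>)"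
    using B by (simp add: algebra_simps)
  finally show "dist (X n \<omega> * Y n \<omega>) (a * b)
      \<le> (B + \<bar>a\<bar>) * (\<Sum>k\<in>{True, False}. dist ((if k then X else Y) n \<omega>) (if k then a else b))"
    by (simp add: dist_real_def)
next
  show "(\<lambda>\<omega>. dist ((if k then X else Y) n \<omega>) (if k then a else b)) \<in> borel_measurable M"
    if "k \<in> {True, False}" for k n
    using assms(4,5) by (cases k) simp_all
qed (use assms(2,3) in simp_all)

lemma conv_in_prob_componentwise:
  fixes X :: "nat \<Rightarrow> 'a \<Rightarrow> 'b::euclidean_space"
  assumes "prob_space M" and "\<And>b. b \<in> Basis \<Longrightarrow> conv_in_prob M (\<lambda>n \<omega>. X n \<omega> \<bullet> b) (x \<bullet> b)"
    and "\<And>n. X n \<in> borel_measurable M"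
  shows "conv_in_prob M X x"
proof (rule conv_in_prob_if_dist_le_sum[where K=Basis and U="\<lambda>b n \<omega>. X n \<omega> \<bullet> b" and C=1])
  show "dist (X n \<omega>) x \<le> 1 * (\<Sum>b\<in>Basis. dist (X n \<omega> \<bullet> b) (x \<bullet> b))" for n \<omega>
    using norm_le_l1[of "X n \<omega> - x"] by (simp add: dist_norm dist_real_def inner_diff_left)
  show "(\<lambda>\<omega>. dist (X n \<omega> \<bullet> b) (x \<bullet> b)) \<in> borel_measurable M" if "b \<in> Basis" for b n
    using assms(3) by measurable
qed (use assms(1,2) in simp_all)

lemma integral_square_sum_orthogonal_le:
  fixes X :: "nat \<Rightarrow> 'a \<Rightarrow> real"
  assumes "prob_space M" and meas: "\<And>i. X i \<in> borel_measurable M"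
    and bounded: "\<And>i \<omega>. \<omega> \<in> space M \<Longrightarrow> \<bar>X i \<omega>\<bar> \<le> B"
    and orth: "\<And>i j. i < n \<Longrightarrow> j < n \<Longrightarrow> i \<noteq> j \<Longrightarrow> (\<integral>\<omega>. X i \<omega> * X j \<omega> \<partial>M) = 0"
  shows "(\<integral>\<omega>. (\<Sum>i<n. X i \<omega>)\<^sup>2 \<partial>M) \<le> n * B\<^sup>2"
proof -
  interpret prob_space M by fact
  have int: "integrable M (\<lambda>\<omega>. X i \<omega> * X j \<omega>)" for i j
    by (rule integrable_const_bound[where B="B * B"])
       (use meas bounded in \<open>auto simp: abs_mult intro!: mult_mono' order.trans[OF abs_ge_zero]\<close>)
  have "(\<integral>\<omega>. (\<Sum>i<n. X i \<omega>)\<^sup>2 \<partial>M) = (\<Sum>i<n. \<Sum>j<n. \<integral>\<omega>. X i \<omega> * X j \<omega> \<partial>M)"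
    using int by (simp add: power2_eq_square sum_product)
  also have "\<dots> = (\<Sum>i<n. \<integral>\<omega>. (X i \<omega>)\<^sup>2 \<partial>M)"
    by (intro sum.cong refl, subst sum.remove[of _ i for i]) (auto simp: orth power2_eq_square)
  also have "\<dots> \<le> (\<Sum>i<n. B\<^sup>2)"
  proof (intro sum_mono integral_le_const)
    show "integrable M (\<lambda>\<omega>. (X i \<omega>)\<^sup>2)" for i
      using int[of i i] by (simp add: power2_eq_square)
    show "AE \<omega> in M. (X i \<omega>)\<^sup>2 \<le> B\<^sup>2" for i
      using power_mono[OF bounded abs_ge_zero, of _ i 2] by (intro AE_I2) simp
  qed
  finally show ?thesis by simp
qed

lemma conv_in_prob_average_orthogonal:
  fixes X :: "nat \<Rightarrow> nat \<Rightarrow> 'a \<Rightarrow> real"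
  assumes "prob_space M"
    and meas: "\<And>n i. X n i \<in> borel_measurable M"
    and bounded: "\<And>n i \<omega>. \<omega> \<in> space M \<Longrightarrow> \<bar>X n i \<omega>\<bar> \<le> B"
    and orth: "\<And>n i j. i < n \<Longrightarrow> j < n \<Longrightarrow> i \<noteq> j \<Longrightarrow> (\<integral>\<omega>. X n i \<omega> * X n j \<omega> \<partial>M) = 0"
  shows "conv_in_prob M (\<lambda>n \<omega>. (1 / real n) * (\<Sum>i<n. X n i \<omega>)) 0"
  unfolding conv_in_prob_def
proof (intro allI impI)
  interpret prob_space M by fact
  fix e :: real assume e: "0 < e"
  have int: "integrable M (\<lambda>\<omega>. X n i \<omega> * X n j \<omega>)" for n i j
    by (rule integrable_const_bound[where B="B * B"])
       (use meas bounded in \<open>auto simp: abs_mult intro!: mult_mono' order.trans[OF abs_ge_zero]\<close>)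
  have second_moment: "(\<integral>\<omega>. (\<Sum>i<n. X n i \<omega>)\<^sup>2 \<partial>M) \<le> n * B\<^sup>2" for n
    using integral_square_sum_orthogonal_le[where X="X n" and n=n, OF prob_space_axioms meas bounded orth] .
  have le: "prob {\<omega> \<in> space M. e < dist ((1 / real n) * (\<Sum>i<n. X n i \<omega>)) 0} \<le> B\<^sup>2 / e\<^sup>2 * (1 / n)"
    if "0 < n" for n
  proof -
    have "prob {\<omega> \<in> space M. e < dist ((1 / real n) * (\<Sum>i<n. X n i \<omega>)) 0}
        \<le> prob {\<omega> \<in> space M. e\<^sup>2 \<le> ((1 / real n) * (\<Sum>i<n. X n i \<omega>))\<^sup>2}"
      using e meas by (intro finite_measure_mono) (auto simp: abs_le_square_iff[symmetric])
    also have "\<dots> \<le> (\<integral>\<omega>. ((1 / real n) * (\<Sum>i<n. X n i \<omega>))\<^sup>2 \<partial>M) / e\<^sup>2"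
    proof (rule integral_Markov_inequality_measure[where A="space M"])
      show "integrable M (\<lambda>\<omega>. ((1 / real n) * (\<Sum>i<n. X n i \<omega>))\<^sup>2)"
        using int by (simp add: power2_eq_square sum_product algebra_simps)
    qed (use e in simp_all)
    also have "\<dots> = (\<integral>\<omega>. (\<Sum>i<n. X n i \<omega>)\<^sup>2 \<partial>M) / (n\<^sup>2 * e\<^sup>2)"
      by (simp add: power_mult_distrib power_divide)
    also have "\<dots> \<le> n * B\<^sup>2 / (n\<^sup>2 * e\<^sup>2)"
      using e by (intro divide_right_mono second_moment) simp
    also have "\<dots> = B\<^sup>2 / e\<^sup>2 * (1 / n)"
      using that by (simp add: power2_eq_square)
    finally show ?thesis .
  qed
  have lim: "(\<lambda>n. B\<^sup>2 / e\<^sup>2 * (1 / real n)) \<longlonglongrightarrow> 0"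
    by (intro tendsto_mult_right_zero lim_const_over_n)
  show "(\<lambda>n. prob {\<omega> \<in> space M. e < dist ((1 / real n) * (\<Sum>i<n. X n i \<omega>)) 0}) \<longlonglongrightarrow> 0"
    by (rule tendsto_sandwich[OF _ _ tendsto_const lim])
       (use le in \<open>auto simp: eventually_sequentially intro!: exI[of _ 1]\<close>)
qed

lemma conv_in_prob_zero_if_L1_approx:
  fixes X :: "nat \<Rightarrow> 'a \<Rightarrow> real"
  assumes "prob_space M" and meas: "\<And>n. X n \<in> borel_measurable M"
    and approx: "\<And>\<eta>. 0 < \<eta> \<Longrightarrow> \<exists>Y. conv_in_prob M Y 0 \<and> (\<forall>n. Y n \<in> borel_measurable M
        \<and> integrable M (\<lambda>\<omega>. X n \<omega> - Y n \<omega>) \<and> (\<integral>\<omega>. \<bar>X n \<omega> - Y n \<omega>\<bar> \<partial>M) \<le> \<eta>)"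
  shows "conv_in_prob M X 0"
  unfolding conv_in_prob_def
proof (intro allI impI LIMSEQ_I)
  interpret prob_space M by fact
  fix e \<delta> :: real assume e: "0 < e" and \<delta>: "0 < \<delta>"
  obtain Y where Y: "conv_in_prob M Y 0" and [measurable]: "\<And>n. Y n \<in> borel_measurable M"
    and int: "\<And>n. integrable M (\<lambda>\<omega>. X n \<omega> - Y n \<omega>)"
    and L1: "\<And>n. (\<integral>\<omega>. \<bar>X n \<omega> - Y n \<omega>\<bar> \<partial>M) \<le> \<delta> * e / 4"
    using approx[of "\<delta> * e / 4"] e \<delta> by auto
  have [measurable]: "X n \<in> borel_measurable M" for n by (rule meas)
  obtain N where N: "\<And>n. N \<le> n \<Longrightarrow> prob {\<omega> \<in> space M. e / 2 < dist (Y n \<omega>) 0} < \<delta> / 2"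
    using Y e \<delta> unfolding conv_in_prob_def by (fastforce dest!: spec[of _ "e / 2"] dest: LIMSEQ_D[of _ 0 "\<delta> / 2"])
  have "prob {\<omega> \<in> space M. e < dist (X n \<omega>) 0} < \<delta>" if "N \<le> n" for n
  proof -
    have "{\<omega> \<in> space M. e < dist (X n \<omega>) 0}
        \<subseteq> {\<omega> \<in> space M. e / 2 < dist (Y n \<omega>) 0} \<union> {\<omega> \<in> space M. e / 2 \<le> \<bar>X n \<omega> - Y n \<omega>\<bar>}"
    proof safe
      fix \<omega> assume "e < dist (X n \<omega>) 0" "\<not> e / 2 \<le> \<bar>X n \<omega> - Y n \<omega>\<bar>"
      moreover have "\<bar>X n \<omega>\<bar> \<le> \<bar>X n \<omega> - Y n \<omega>\<bar> + \<bar>Y n \<omega>\<bar>"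
        using abs_triangle_ineq[of "X n \<omega> - Y n \<omega>" "Y n \<omega>"] by simp
      ultimately show "e / 2 < dist (Y n \<omega>) 0" by simp
    qed
    then have "prob {\<omega> \<in> space M. e < dist (X n \<omega>) 0}
        \<le> prob ({\<omega> \<in> space M. e / 2 < dist (Y n \<omega>) 0} \<union> {\<omega> \<in> space M. e / 2 \<le> \<bar>X n \<omega> - Y n \<omega>\<bar>})"
      by (intro finite_measure_mono) measurable
    also have "\<dots> \<le> prob {\<omega> \<in> space M. e / 2 < dist (Y n \<omega>) 0} + prob {\<omega> \<in> space M. e / 2 \<le> \<bar>X n \<omega> - Y n \<omega>\<bar>}"
      by (rule measure_Un_le) measurable
    also have "prob {\<omega> \<in> space M. e / 2 \<le> \<bar>X n \<omega> - Y n \<omega>\<bar>} \<le> (\<integral>\<omega>. \<bar>X n \<omega> - Y n \<omega>\<bar> \<partial>M) / (e / 2)"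
      using int e by (intro integral_Markov_inequality_measure[where A="space M"]) auto
    also have "\<dots> \<le> \<delta> / 2"
      using L1[of n] e by (simp add: field_simps)
    finally show ?thesis using N[OF that] by linarith
  qed
  then show "\<exists>N. \<forall>n\<ge>N. norm (prob {\<omega> \<in> space M. e < dist (X n \<omega>) 0} - 0) < \<delta>"
    by auto
qed

section \<open>Integration\<close>

lemma integral_same_distr:
  fixes f :: "'b \<Rightarrow> 'c::{banach, second_countable_topology}"
  assumes "X \<in> measurable M N" and "Y \<in> measurable M N" and "distr M N X = distr M N Y"
    and "f \<in> borel_measurable N"
  shows "(\<integral>\<omega>. f (X \<omega>) \<partial>M) = (\<integral>\<omega>. f (Y \<omega>) \<partial>M)"
  using assms by (metis integral_distr)

lemma integrable_same_distr:
  fixes f :: "'b \<Rightarrow> 'c::{banach, second_countable_topology}"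
  assumes "X \<in> measurable M N" and "Y \<in> measurable M N" and "distr M N X = distr M N Y"
    and "f \<in> borel_measurable N"
  shows "integrable M (\<lambda>\<omega>. f (X \<omega>)) \<longleftrightarrow> integrable M (\<lambda>\<omega>. f (Y \<omega>))"
  using assms by (metis integrable_distr_eq)

lemma integral_indicator_proportional:
  fixes V :: "'a \<Rightarrow> 'b" and \<phi> :: "'b \<Rightarrow> real"
  assumes "finite_measure M" and V[measurable]: "V \<in> measurable M N"
    and [measurable]: "E \<in> sets M" "F \<in> sets M" and \<phi>[measurable]: "\<phi> \<in> borel_measurable N"
    and proportional: "\<And>B. B \<in> sets N \<Longrightarrow>
        measure M ({\<omega> \<in> space M. V \<omega> \<in> B} \<inter> E) * measure M F
      = measure M ({\<omega> \<in> space M. V \<omega> \<in> B} \<inter> F) * measure M E"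
  shows "(\<integral>\<omega>. indicator E \<omega> * \<phi> (V \<omega>) \<partial>M) * measure M F
       = (\<integral>\<omega>. indicator F \<omega> * \<phi> (V \<omega>) \<partial>M) * measure M E"
proof -
  interpret finite_measure M by fact
  define \<nu> where "\<nu> G c = distr (density M (\<lambda>\<omega>. ennreal (indicator G \<omega> * c))) N V" for G c
  have emeasure_\<nu>: "emeasure (\<nu> G c) B = ennreal (c * measure M ({\<omega> \<in> space M. V \<omega> \<in> B} \<inter> G))"
    if [measurable]: "G \<in> sets M" "B \<in> sets N" and "0 \<le> c" for G c B
  proof -
    have "emeasure (\<nu> G c) B = (\<integral>\<^sup>+ \<omega>. ennreal c * indicator ({\<omega> \<in> space M. V \<omega> \<in> B} \<inter> G) \<omega> \<partial>M)"
      unfolding \<nu>_def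
      by (simp add: emeasure_distr emeasure_density, intro nn_integral_cong)
         (auto simp: indicator_def)
    also have "\<dots> = ennreal (c * measure M ({\<omega> \<in> space M. V \<omega> \<in> B} \<inter> G))"
      using \<open>0 \<le> c\<close> by (simp add: nn_integral_cmult_indicator emeasure_eq_measure ennreal_mult)
    finally show ?thesis .
  qed
  have integral_\<nu>: "integral\<^sup>L (\<nu> G c) \<phi> = (\<integral>\<omega>. indicator G \<omega> * \<phi> (V \<omega>) \<partial>M) * c"
    if [measurable]: "G \<in> sets M" and "0 \<le> c" for G c
    using \<open>0 \<le> c\<close> unfolding \<nu>_def
    by (simp add: integral_distr integral_density mult_ac)
  have "\<nu> E (measure M F) = \<nu> F (measure M E)"
  proof (rule measure_eqI)
    fix B assume "B \<in> sets (\<nu> E (measure M F))"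
    then have "B \<in> sets N" by (simp add: \<nu>_def)
    then show "emeasure (\<nu> E (measure M F)) B = emeasure (\<nu> F (measure M E)) B"
      using proportional[of B] by (simp add: emeasure_\<nu> mult.commute)
  qed (simp add: \<nu>_def)
  then show ?thesis
    using integral_\<nu>[of E "measure M F"] integral_\<nu>[of F "measure M E"] by simp
qed

(* Also when the measure vanishes: then so does the integral, and x / 0 = 0. *)
lemma integral_supported_divide_measure_cancel:
  fixes f :: "'b \<Rightarrow> real"
  assumes "finite_measure M" and "X \<in> measurable M N" and "D \<in> sets N"
    and supp: "\<And>x. f x \<noteq> 0 \<Longrightarrow> x \<in> D"
  shows "(\<integral>\<omega>. f (X \<omega>) \<partial>M) / measure M {\<omega> \<in> space M. X \<omega> \<in> D} * measure M {\<omega> \<in> space M. X \<omega> \<in> D}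
       = (\<integral>\<omega>. f (X \<omega>) \<partial>M)"
proof (cases "measure M {\<omega> \<in> space M. X \<omega> \<in> D} = 0")
  case True
  interpret finite_measure M by fact
  have "{\<omega> \<in> space M. X \<omega> \<in> D} \<in> null_sets M"
    using True assms(2,3) by (simp add: null_sets_def emeasure_eq_measure)
  then have "AE \<omega> in M. f (X \<omega>) = 0"
    by (rule AE_I') (use supp in auto)
  then show ?thesis by (simp add: integral_eq_zero_AE)
qed simp

lemma integrable_truncation_approx:
  fixes f :: "'a \<Rightarrow> real"
  assumes "integrable M f" and "0 < \<eta>"
  obtains m :: nat where "(\<integral>\<omega>. \<bar>f \<omega> - (if \<bar>f \<omega>\<bar> \<le> m then f \<omega> else 0)\<bar> \<partial>M) < \<eta>"
proof -
  have [measurable]: "f \<in> borel_measurable M" using assms(1) by auto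
  have "(\<lambda>m::nat. \<integral>\<omega>. \<bar>f \<omega> - (if \<bar>f \<omega>\<bar> \<le> m then f \<omega> else 0)\<bar> \<partial>M) \<longlonglongrightarrow> (\<integral>\<omega>. 0 \<partial>M)"
  proof (rule integral_dominated_convergence[where w="\<lambda>\<omega>. \<bar>f \<omega>\<bar>"])
    show "AE \<omega> in M. (\<lambda>m::nat. \<bar>f \<omega> - (if \<bar>f \<omega>\<bar> \<le> m then f \<omega> else 0)\<bar>) \<longlonglongrightarrow> 0"
    proof (rule AE_I2)
      fix \<omega>
      obtain N :: nat where "\<bar>f \<omega>\<bar> \<le> N" using real_arch_simple by blast
      then have "\<forall>\<^sub>F m in sequentially. \<bar>f \<omega> - (if \<bar>f \<omega>\<bar> \<le> m then f \<omega> else 0)\<bar> = 0"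
        unfolding eventually_sequentially by (intro exI[of _ N]) auto
      then show "(\<lambda>m::nat. \<bar>f \<omega> - (if \<bar>f \<omega>\<bar> \<le> m then f \<omega> else 0)\<bar>) \<longlonglongrightarrow> 0"
        by (rule tendsto_eventually)
    qed
  qed (use assms(1) in auto)
  from LIMSEQ_D[OF this[simplified] \<open>0 < \<eta>\<close>] that show ?thesis by fastforce
qed

lemma recentered_on_set:
  fixes t :: "'b \<Rightarrow> real"
  assumes "prob_space M" and X[measurable]: "X \<in> measurable M N"
    and [measurable]: "t \<in> borel_measurable N" and D[measurable]: "D \<in> sets N"
    and bounded: "\<And>x. \<bar>t x\<bar> \<le> B" and supp: "\<And>x. t x \<noteq> 0 \<Longrightarrow> x \<in> D"
  obtains v C where "v \<in> borel_measurable N" and "\<And>x. \<bar>v x\<bar> \<le> C" and "\<And>x. v x \<noteq> 0 \<Longrightarrow> x \<in> D"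
    and "(\<integral>\<omega>. v (X \<omega>) \<partial>M) = 0" and "(\<integral>\<omega>. \<bar>t (X \<omega>) - v (X \<omega>)\<bar> \<partial>M) \<le> \<bar>\<integral>\<omega>. t (X \<omega>) \<partial>M\<bar>"
proof -
  interpret prob_space M by fact
  define c where "c = (\<integral>\<omega>. t (X \<omega>) \<partial>M)"
  define p where "p = prob {\<omega> \<in> space M. X \<omega> \<in> D}"
  define v where "v x = t x - c / p * indicator D x" for x
  have t_int: "integrable M (\<lambda>\<omega>. t (X \<omega>))"
    by (rule integrable_const_bound[where B=B]) (use bounded in auto)
  have D_int: "integrable M (\<lambda>\<omega>. indicator D (X \<omega>) :: real)"
    by (rule integrable_const_bound[where B=1]) (auto simp: indicator_def)
  have integral_D: "(\<integral>\<omega>. indicator D (X \<omega>) \<partial>M) = p"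
  proof -
    have "(\<integral>\<omega>. indicator D (X \<omega>) \<partial>M) = (\<integral>\<omega>. indicator {\<omega> \<in> space M. X \<omega> \<in> D} \<omega> \<partial>M :: real)"
      by (rule Bochner_Integration.integral_cong) (auto simp: indicator_def)
    moreover have "{\<omega> \<in> space M. X \<omega> \<in> D} \<in> events" by measurable
    ultimately show ?thesis by (simp add: p_def)
  qed
  have c_p: "c / p * p = c"
    unfolding c_def p_def by (rule integral_supported_divide_measure_cancel[OF finite_measure_axioms X D supp])
  show ?thesis
  proof
    show "v \<in> borel_measurable N" unfolding v_def by measurable
    show "\<bar>v x\<bar> \<le> B + \<bar>c / p\<bar>" for x
    proof -
      have "\<bar>v x\<bar> \<le> \<bar>t x\<bar> + \<bar>c / p * indicator D x\<bar>"
        unfolding v_def by (rule abs_triangle_ineq4)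
      also have "\<dots> \<le> B + \<bar>c / p\<bar>"
        using bounded[of x] by (intro add_mono) (auto simp: indicator_def)
      finally show ?thesis .
    qed
    show "v x \<noteq> 0 \<Longrightarrow> x \<in> D" for x
      using supp[of x] by (cases "x \<in> D") (auto simp: v_def)
    show "(\<integral>\<omega>. v (X \<omega>) \<partial>M) = 0"
      using t_int D_int integral_D c_p by (simp add: v_def c_def)
    have "(\<integral>\<omega>. \<bar>t (X \<omega>) - v (X \<omega>)\<bar> \<partial>M) = (\<integral>\<omega>. \<bar>c / p\<bar> * indicator D (X \<omega>) \<partial>M)"
      by (rule Bochner_Integration.integral_cong) (auto simp: v_def abs_mult)
    also have "\<dots> = \<bar>c / p\<bar> * p"
      by (simp add: integral_D)
    also have "\<dots> = \<bar>c\<bar>"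
      using c_p by (metis abs_mult abs_of_nonneg measure_nonneg p_def)
    finally show "(\<integral>\<omega>. \<bar>t (X \<omega>) - v (X \<omega>)\<bar> \<partial>M) \<le> \<bar>\<integral>\<omega>. t (X \<omega>) \<partial>M\<bar>"
      by (simp add: c_def)
  qed
qed

lemma centered_bounded_approximation:
  fixes u :: "'b \<Rightarrow> real"
  assumes "prob_space M" and X[measurable]: "X \<in> measurable M N"
    and u[measurable]: "u \<in> borel_measurable N" and D[measurable]: "D \<in> sets N"
    and supp: "\<And>x. u x \<noteq> 0 \<Longrightarrow> x \<in> D"
    and int: "integrable M (\<lambda>\<omega>. u (X \<omega>))" and centered: "(\<integral>\<omega>. u (X \<omega>) \<partial>M) = 0"
    and "0 < \<eta>"
  obtains v B where "v \<in> borel_measurable N" and "\<And>x. \<bar>v x\<bar> \<le> B" and "\<And>x. v x \<noteq> 0 \<Longrightarrow> x \<in> D"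
    and "(\<integral>\<omega>. v (X \<omega>) \<partial>M) = 0" and "(\<integral>\<omega>. \<bar>u (X \<omega>) - v (X \<omega>)\<bar> \<partial>M) \<le> \<eta>"
proof -
  interpret prob_space M by fact
  obtain m :: nat where truncation:
    "(\<integral>\<omega>. \<bar>u (X \<omega>) - (if \<bar>u (X \<omega>)\<bar> \<le> m then u (X \<omega>) else 0)\<bar> \<partial>M) < \<eta> / 2"
    by (rule integrable_truncation_approx[OF int, of "\<eta> / 2"]) (use \<open>0 < \<eta>\<close> in auto)
  define t where "t x = (if \<bar>u x\<bar> \<le> m then u x else 0)" for x
  have t_meas[measurable]: "t \<in> borel_measurable N"
    unfolding t_def by measurable
  have ut: "(\<integral>\<omega>. \<bar>u (X \<omega>) - t (X \<omega>)\<bar> \<partial>M) < \<eta> / 2"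
    using truncation unfolding t_def .
  have t_int: "integrable M (\<lambda>\<omega>. t (X \<omega>))"
    by (rule integrable_const_bound[where B=m]) (auto simp: t_def)
  have t_bounded: "\<bar>t x\<bar> \<le> m" and t_supp: "t x \<noteq> 0 \<Longrightarrow> x \<in> D" for x
    using supp[of x] by (auto simp: t_def split: if_splits)
  obtain v B where [measurable]: "v \<in> borel_measurable N" and v_bounded: "\<And>x. \<bar>v x\<bar> \<le> B"
    and "\<And>x. v x \<noteq> 0 \<Longrightarrow> x \<in> D" and "(\<integral>\<omega>. v (X \<omega>) \<partial>M) = 0"
    and tv: "(\<integral>\<omega>. \<bar>t (X \<omega>) - v (X \<omega>)\<bar> \<partial>M) \<le> \<bar>\<integral>\<omega>. t (X \<omega>) \<partial>M\<bar>"
    using recentered_on_set[OF prob_space_axioms X t_meas D t_bounded t_supp] by metis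
  have v_int: "integrable M (\<lambda>\<omega>. v (X \<omega>))"
  proof (rule integrable_const_bound[where B=B])
    show "AE \<omega> in M. norm (v (X \<omega>)) \<le> B" using v_bounded by simp
  qed measurable
  have "\<bar>\<integral>\<omega>. t (X \<omega>) \<partial>M\<bar> = \<bar>\<integral>\<omega>. u (X \<omega>) - t (X \<omega>) \<partial>M\<bar>"
    using int t_int centered by simp
  also have "\<dots> \<le> (\<integral>\<omega>. \<bar>u (X \<omega>) - t (X \<omega>)\<bar> \<partial>M)"
    by (rule integral_abs_bound)
  finally have "(\<integral>\<omega>. \<bar>t (X \<omega>) - v (X \<omega>)\<bar> \<partial>M) < \<eta> / 2"
    using tv ut by linarith
  moreover have "(\<integral>\<omega>. \<bar>u (X \<omega>) - v (X \<omega>)\<bar> \<partial>M)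
      \<le> (\<integral>\<omega>. \<bar>u (X \<omega>) - t (X \<omega>)\<bar> + \<bar>t (X \<omega>) - v (X \<omega>)\<bar> \<partial>M)"
  proof (rule integral_mono)
    show "\<bar>u (X \<omega>) - v (X \<omega>)\<bar> \<le> \<bar>u (X \<omega>) - t (X \<omega>)\<bar> + \<bar>t (X \<omega>) - v (X \<omega>)\<bar>" for \<omega>
      using abs_triangle_ineq[of "u (X \<omega>) - t (X \<omega>)" "t (X \<omega>) - v (X \<omega>)"] by simp
  qed (intro integrable_abs Bochner_Integration.integrable_add Bochner_Integration.integrable_diff int t_int v_int)+
  moreover have "(\<integral>\<omega>. \<bar>u (X \<omega>) - t (X \<omega>)\<bar> + \<bar>t (X \<omega>) - v (X \<omega>)\<bar> \<partial>M)
      = (\<integral>\<omega>. \<bar>u (X \<omega>) - t (X \<omega>)\<bar> \<partial>M) + (\<integral>\<omega>. \<bar>t (X \<omega>) - v (X \<omega>)\<bar> \<partial>M)"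
    by (intro Bochner_Integration.integral_add integrable_abs Bochner_Integration.integrable_diff int t_int v_int)
  ultimately have "(\<integral>\<omega>. \<bar>u (X \<omega>) - v (X \<omega>)\<bar> \<partial>M) \<le> \<eta>"
    using ut by linarith
  show ?thesis
    by (rule that) fact+
qed

section \<open>Stratified assignment\<close>

lemma card_less_eq_sum_of_bool: "real (card {i. i < (n::nat) \<and> P i}) = (\<Sum>i<n. of_bool (P i))"
proof -
  have "(\<Sum>i<n. of_bool (P i)) = real (card ({..<n} \<inter> {i. P i}))"
    by (rule sum_of_bool_eq) auto
  also have "{..<n} \<inter> {i. P i} = {i. i < n \<and> P i}" by auto
  finally show ?thesis ..
qed

lemma restrict_eq_restrict_iff: "restrict f I = restrict g I \<longleftrightarrow> (\<forall>x\<in>I. f x = g x)"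
  by (metis restrict_apply' restrict_ext)

lemma N_s_le: "N_s Z Sf n s \<omega> \<le> n"
proof -
  have "card {i. i < n \<and> Sf (Z i \<omega>) = s} \<le> card {..<n}"
    by (rule card_mono) auto
  then show ?thesis unfolding N_s_def by simp
qed

(* W i stands for W_i = (Y_i(0), Y_i(1), Z_i), S w for the stratum of w, and A n for the
   assignment vector of the n-th experiment. *)
locale stratified_assignment = prob_space M
  for M :: "'a measure"
    and W :: "nat \<Rightarrow> 'a \<Rightarrow> 'w::topological_space"
    and S :: "'w \<Rightarrow> nat"
    and Sc :: nat
    and A :: "nat \<Rightarrow> nat \<Rightarrow> 'a \<Rightarrow> nat" +
  assumes W_meas[measurable]: "\<And>i. W i \<in> borel_measurable M"
    and W_indep: "indep_vars (\<lambda>_. borel) W UNIV"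
    and W_ident: "\<And>i. distr M borel (W i) = distr M borel (W 0)"
    and S_meas[measurable]: "S \<in> borel \<rightarrow>\<^sub>M count_space UNIV"
    and S_range: "\<And>w. S w \<in> {1..Sc}"
    and A_meas[measurable]: "\<And>n i. A n i \<in> M \<rightarrow>\<^sub>M count_space UNIV"
    and A_bin: "\<And>n i \<omega>. A n i \<omega> \<in> {0, 1}"
    and cond_indep: "\<And>n. cond_indep_strata M n W (A n) (\<lambda>i \<omega>. S (W i \<omega>))"
begin

definition stratum_prob :: "nat \<Rightarrow> real" where
  "stratum_prob s = prob {\<omega> \<in> space M. S (W 0 \<omega>) = s}"

lemma integral_stratum_indicator: "(\<integral>\<omega>. of_bool (S (W 0 \<omega>) = s) \<partial>M) = stratum_prob s"
proof -
  have "(\<integral>\<omega>. of_bool (S (W 0 \<omega>) = s) \<partial>M)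
      = (\<integral>\<omega>. indicator {\<omega> \<in> space M. S (W 0 \<omega>) = s} \<omega> \<partial>M :: real)"
    by (rule Bochner_Integration.integral_cong) auto
  moreover have "{\<omega> \<in> space M. S (W 0 \<omega>) = s} \<in> events" by measurable
  ultimately show ?thesis by (simp add: stratum_prob_def)
qed

lemma integral_W:
  fixes f :: "'w \<Rightarrow> 'c::{banach, second_countable_topology}"
  shows "f \<in> borel_measurable borel \<Longrightarrow> (\<integral>\<omega>. f (W i \<omega>) \<partial>M) = (\<integral>\<omega>. f (W 0 \<omega>) \<partial>M)"
  by (rule integral_same_distr[OF W_meas W_meas W_ident])

lemma integrable_W:
  fixes f :: "'w \<Rightarrow> 'c::{banach, second_countable_topology}"
  shows "f \<in> borel_measurable borel \<Longrightarrow> integrable M (\<lambda>\<omega>. f (W i \<omega>)) \<longleftrightarrow> integrable M (\<lambda>\<omega>. f (W 0 \<omega>))"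
  by (rule integrable_same_distr[OF W_meas W_meas W_ident])

lemma average_bounded_conv:
  fixes v :: "'w \<Rightarrow> real"
  assumes [measurable]: "v \<in> borel_measurable borel" and bounded: "\<And>w. \<bar>v w\<bar> \<le> C"
  shows "conv_in_prob M (\<lambda>n \<omega>. (1 / real n) * (\<Sum>i<n. v (W i \<omega>))) (\<integral>\<omega>. v (W 0 \<omega>) \<partial>M)"
proof -
  define c where "c = (\<integral>\<omega>. v (W 0 \<omega>) \<partial>M)"
  have v_int: "integrable M (\<lambda>\<omega>. v (W i \<omega>))" for i
    by (rule integrable_const_bound[where B=C]) (use bounded in auto)
  have centered: "(\<integral>\<omega>. v (W i \<omega>) - c \<partial>M) = 0" for i
    using v_int integral_W[of v i] by (simp add: c_def prob_space)
  have "conv_in_prob M (\<lambda>n \<omega>. (1 / real n) * (\<Sum>i<n. v (W i \<omega>) - c)) 0"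
  proof (rule conv_in_prob_average_orthogonal[OF prob_space_axioms, where B="C + \<bar>c\<bar>"])
    show "\<bar>v (W i \<omega>) - c\<bar> \<le> C + \<bar>c\<bar>" for i \<omega>
      using bounded[of "W i \<omega>"] by linarith
    show "(\<integral>\<omega>. (v (W i \<omega>) - c) * (v (W j \<omega>) - c) \<partial>M) = 0" if "i \<noteq> j" for i j
    proof -
      have "indep_vars (\<lambda>_. borel) W {i, j}"
        by (rule indep_vars_subset[OF W_indep]) auto
      then have indep: "indep_vars (\<lambda>_. borel) (\<lambda>k \<omega>. v (W k \<omega>) - c) {i, j}"
        by (rule indep_vars_compose2) measurable
      have "(\<integral>\<omega>. (\<Prod>k\<in>{i, j}. v (W k \<omega>) - c) \<partial>M) = (\<Prod>k\<in>{i, j}. \<integral>\<omega>. v (W k \<omega>) - c \<partial>M)"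
        by (rule indep_vars_lebesgue_integral[OF _ indep]) (use v_int in auto)
      then show ?thesis
        using that centered by simp
    qed
  qed measurable
  then show ?thesis
    unfolding c_def[symmetric]
  proof (rule conv_in_prob_if_dist_le_sum[OF prob_space_axioms, where K="{()}" and C=1, rotated 1])
    show "dist ((1 / real n) * (\<Sum>i<n. v (W i \<omega>))) c
        \<le> 1 * (\<Sum>k\<in>{()}. dist ((1 / real n) * (\<Sum>i<n. v (W i \<omega>) - c)) 0)" if "0 < n" for n \<omega>
      using that by (simp add: dist_real_def sum_subtractf field_simps)
  qed measurable
qed

lemma stratum_frequency_conv:
  "conv_in_prob M (\<lambda>n \<omega>. real (N_s W S n s \<omega>) / real n) (stratum_prob s)"
proof -
  have "conv_in_prob M (\<lambda>n \<omega>. (1 / real n) * (\<Sum>i<n. of_bool (S (W i \<omega>) = s)))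
      (\<integral>\<omega>. of_bool (S (W 0 \<omega>) = s) \<partial>M)"
    by (rule average_bounded_conv[where C=1]) auto
  then show ?thesis
    by (simp add: N_s_def card_less_eq_sum_of_bool integral_stratum_indicator)
qed

lemma N_s_measurable[measurable]: "(\<lambda>\<omega>. real (N_s W S n s \<omega>)) \<in> borel_measurable M"
  unfolding N_s_def card_less_eq_sum_of_bool by measurable

lemma N_as_measurable[measurable]: "(\<lambda>\<omega>. real (N_as A W S n a s \<omega>)) \<in> borel_measurable M"
  unfolding N_as_def card_less_eq_sum_of_bool by measurable

lemma N_s_split: "N_s W S n s \<omega> = N_as A W S n 1 s \<omega> + N_as A W S n 0 s \<omega>"
proof -
  have "A n i \<omega> = 0 \<or> A n i \<omega> = 1" for i
    using A_bin[of n i \<omega>] by auto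
  then have "{i. i < n \<and> S (W i \<omega>) = s}
      = {i. i < n \<and> A n i \<omega> = 1 \<and> S (W i \<omega>) = s} \<union> {i. i < n \<and> A n i \<omega> = 0 \<and> S (W i \<omega>) = s}"
    by blast
  moreover have "card ({i. i < n \<and> A n i \<omega> = 1 \<and> S (W i \<omega>) = s} \<union> {i. i < n \<and> A n i \<omega> = 0 \<and> S (W i \<omega>) = s})
      = card {i. i < n \<and> A n i \<omega> = 1 \<and> S (W i \<omega>) = s} + card {i. i < n \<and> A n i \<omega> = 0 \<and> S (W i \<omega>) = s}"
    by (rule card_Un_disjoint) auto
  ultimately show ?thesis
    unfolding N_s_def N_as_def by simp
qed

lemma arm_frequency_conv:
  assumes balance: "conv_in_prob M (\<lambda>n \<omega>. real (N_as A W S n 1 s \<omega>) / real (N_s W S n s \<omega>)) \<pi>"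
  shows "conv_in_prob M (\<lambda>n \<omega>. real (N_as A W S n 1 s \<omega>) / real n) (\<pi> * stratum_prob s)"
    and "conv_in_prob M (\<lambda>n \<omega>. real (N_as A W S n 0 s \<omega>) / real n) ((1 - \<pi>) * stratum_prob s)"
proof -
  \<comment> \<open>This also holds when N_s vanishes, since then N_as vanishes and x / 0 = 0.\<close>
  have treated: "(\<lambda>n \<omega>. real (N_as A W S n 1 s \<omega>) / real n)
      = (\<lambda>n \<omega>. real (N_as A W S n 1 s \<omega>) / real (N_s W S n s \<omega>) * (real (N_s W S n s \<omega>) / real n))"
  proof (intro ext)
    fix n \<omega>
    show "real (N_as A W S n 1 s \<omega>) / real n
        = real (N_as A W S n 1 s \<omega>) / real (N_s W S n s \<omega>) * (real (N_s W S n s \<omega>) / real n)"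
    proof (cases "N_s W S n s \<omega> = 0")
      case True
      then show ?thesis using N_s_split[of n s \<omega>] by simp
    qed simp
  qed
  have untreated: "(\<lambda>n \<omega>. real (N_as A W S n 0 s \<omega>) / real n)
      = (\<lambda>n \<omega>. real (N_s W S n s \<omega>) / real n - real (N_as A W S n 1 s \<omega>) / real n)"
    by (simp add: fun_eq_iff N_s_split add_divide_distrib)
  have "conv_in_prob M (\<lambda>n \<omega>. real (N_as A W S n 1 s \<omega>) / real (N_s W S n s \<omega>)
      * (real (N_s W S n s \<omega>) / real n)) (\<pi> * stratum_prob s)"
  proof (rule conv_in_prob_mult_bounded[OF prob_space_axioms balance stratum_frequency_conv, where B=1])
    show "\<bar>real (N_s W S n s \<omega>) / real n\<bar> \<le> 1" for n \<omega>
      using N_s_le[of W S n s \<omega>] by (cases "n = 0") (simp_all add: divide_le_eq_1)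
  qed measurable
  then show treated_conv: "conv_in_prob M (\<lambda>n \<omega>. real (N_as A W S n 1 s \<omega>) / real n) (\<pi> * stratum_prob s)"
    by (simp only: treated)
  have "conv_in_prob M (\<lambda>n \<omega>. real (N_s W S n s \<omega>) / real n - real (N_as A W S n 1 s \<omega>) / real n)
      (stratum_prob s - \<pi> * stratum_prob s)"
    by (rule conv_in_prob_diff[OF prob_space_axioms stratum_frequency_conv treated_conv]) measurable
  then show "conv_in_prob M (\<lambda>n \<omega>. real (N_as A W S n 0 s \<omega>) / real n) ((1 - \<pi>) * stratum_prob s)"
    by (simp only: untreated left_diff_distrib mult_1)
qed

lemma integral_stratum_pattern_product_zero:
  fixes v :: "'w \<Rightarrow> real"
  assumes [measurable]: "v \<in> borel_measurable borel" and bounded: "\<And>w. \<bar>v w\<bar> \<le> C"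
    and centered: "(\<integral>\<omega>. v (W 0 \<omega>) \<partial>M) = 0" and supp: "\<And>w. v w \<noteq> 0 \<Longrightarrow> S w = s"
    and ij: "i < n" "j < n" "i \<noteq> j"
  shows "(\<integral>\<omega>. indicator {\<omega> \<in> space M. \<forall>k<n. S (W k \<omega>) = \<sigma> k} \<omega> * (v (W i \<omega>) * v (W j \<omega>)) \<partial>M) = 0"
proof -
  \<comment> \<open>By independence the integral factorises; the factor of unit i is 0 or the mean of v.\<close>
  define g where "g k w = (if S w = \<sigma> k then (if k = i then v w else 1) * (if k = j then v w else 1) else 0)"
    for k w
  have [measurable]: "g k \<in> borel_measurable borel" for k
    unfolding g_def by measurable
  have g_bounded: "\<bar>g k w\<bar> \<le> max 1 C * max 1 C" for k w
  proof -
    have "\<bar>if k = i then v w else 1\<bar> \<le> max 1 C" and "\<bar>if k = j then v w else 1\<bar> \<le> max 1 C"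
      using bounded[of w] by auto
    then have "\<bar>(if k = i then v w else 1) * (if k = j then v w else 1)\<bar> \<le> max 1 C * max 1 C"
      unfolding abs_mult by (rule mult_mono) auto
    moreover have "\<bar>g k w\<bar> \<le> \<bar>(if k = i then v w else 1) * (if k = j then v w else 1)\<bar>"
      by (simp add: g_def)
    ultimately show ?thesis by linarith
  qed
  have g_int: "integrable M (\<lambda>\<omega>. g k (W k \<omega>))" for k
    by (rule integrable_const_bound[where B="max 1 C * max 1 C"]) (use g_bounded in auto)
  have "(\<integral>\<omega>. indicator {\<omega> \<in> space M. \<forall>k<n. S (W k \<omega>) = \<sigma> k} \<omega> * (v (W i \<omega>) * v (W j \<omega>)) \<partial>M)
      = (\<integral>\<omega>. (\<Prod>k<n. g k (W k \<omega>)) \<partial>M)"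
  proof (rule Bochner_Integration.integral_cong[OF refl])
    fix \<omega> assume "\<omega> \<in> space M"
    show "indicator {\<omega> \<in> space M. \<forall>k<n. S (W k \<omega>) = \<sigma> k} \<omega> * (v (W i \<omega>) * v (W j \<omega>))
        = (\<Prod>k<n. g k (W k \<omega>))"
    proof (cases "\<forall>k<n. S (W k \<omega>) = \<sigma> k")
      case True
      then have "(\<Prod>k<n. g k (W k \<omega>))
          = (\<Prod>k<n. if k = i then v (W k \<omega>) else 1) * (\<Prod>k<n. if k = j then v (W k \<omega>) else 1)"
        by (simp add: g_def prod.distrib)
      then show ?thesis
        using True ij \<open>\<omega> \<in> space M\<close> by (simp add: prod.delta)
    next
      case False
      then obtain k where "k < n" "S (W k \<omega>) \<noteq> \<sigma> k" by auto
      then have "(\<Prod>k<n. g k (W k \<omega>)) = 0"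
        by (intro prod_zero) (auto simp: g_def)
      then show ?thesis using False by simp
    qed
  qed
  also have "\<dots> = (\<Prod>k<n. \<integral>\<omega>. g k (W k \<omega>) \<partial>M)"
  proof (rule indep_vars_lebesgue_integral)
    have "indep_vars (\<lambda>_. borel) W {..<n}"
      by (rule indep_vars_subset[OF W_indep]) auto
    from indep_vars_compose2[OF this, of g "\<lambda>_. borel"]
    show "indep_vars (\<lambda>_. borel) (\<lambda>k \<omega>. g k (W k \<omega>)) {..<n}" by simp
  qed (use g_int in auto)
  also have "\<dots> = 0"
  proof -
    have "g i w = of_bool (\<sigma> i = s) * v w" for w
      using ij supp[of w] by (cases "v w = 0") (auto simp: g_def)
    then have "(\<integral>\<omega>. g i (W i \<omega>) \<partial>M) = of_bool (\<sigma> i = s) * (\<integral>\<omega>. v (W 0 \<omega>) \<partial>M)"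
      using integral_W[of v i] by simp
    then show ?thesis
      using ij centered by (intro prod_zero bexI[of _ i]) simp_all
  qed
  finally show ?thesis .
qed

lemma cond_indep_integral:
  fixes \<phi> :: "(nat \<Rightarrow> 'w) \<Rightarrow> real" and \<alpha> \<sigma> :: "nat \<Rightarrow> nat"
  assumes [measurable]: "\<phi> \<in> borel_measurable (PiM {..<n} (\<lambda>_. borel))"
  defines "E \<equiv> {\<omega> \<in> space M. \<forall>k<n. A n k \<omega> = \<alpha> k \<and> S (W k \<omega>) = \<sigma> k}"
    and "F \<equiv> {\<omega> \<in> space M. \<forall>k<n. S (W k \<omega>) = \<sigma> k}"
  shows "(\<integral>\<omega>. indicator E \<omega> * \<phi> (restrict (\<lambda>k. W k \<omega>) {..<n}) \<partial>M) * prob F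
       = (\<integral>\<omega>. indicator F \<omega> * \<phi> (restrict (\<lambda>k. W k \<omega>) {..<n}) \<partial>M) * prob E"
proof (rule integral_indicator_proportional[where N="PiM {..<n} (\<lambda>_. borel)"
      and V="\<lambda>\<omega>. restrict (\<lambda>k. W k \<omega>) {..<n}" and \<phi>=\<phi>])
  have E_eq: "E = {\<omega> \<in> space M. restrict (\<lambda>k. A n k \<omega>) {..<n} = restrict \<alpha> {..<n}
                                \<and> restrict (\<lambda>k. S (W k \<omega>)) {..<n} = restrict \<sigma> {..<n}}"
    and F_eq: "F = {\<omega> \<in> space M. restrict (\<lambda>k. S (W k \<omega>)) {..<n} = restrict \<sigma> {..<n}}"
    by (auto simp: E_def F_def restrict_eq_restrict_iff)
  fix B assume "B \<in> sets (PiM {..<n} (\<lambda>_. borel :: 'w measure))"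
  with cond_indep[of n]
  show "prob ({\<omega> \<in> space M. restrict (\<lambda>k. W k \<omega>) {..<n} \<in> B} \<inter> E) * prob F
      = prob ({\<omega> \<in> space M. restrict (\<lambda>k. W k \<omega>) {..<n} \<in> B} \<inter> F) * prob E"
    unfolding cond_indep_strata_def E_eq F_eq
    by (simp add: Collect_conj_eq Int_assoc Int_left_commute mult.commute)
qed (simp_all add: finite_measure_axioms measurable_restrict E_def F_def)

lemma integral_assignment_pattern_product_zero:
  fixes v :: "'w \<Rightarrow> real"
  assumes [measurable]: "v \<in> borel_measurable borel" and bounded: "\<And>w. \<bar>v w\<bar> \<le> C"
    and centered: "(\<integral>\<omega>. v (W 0 \<omega>) \<partial>M) = 0" and supp: "\<And>w. v w \<noteq> 0 \<Longrightarrow> S w = s"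
    and ij: "i < n" "j < n" "i \<noteq> j"
  shows "(\<integral>\<omega>. indicator {\<omega> \<in> space M. \<forall>k<n. A n k \<omega> = \<alpha> k \<and> S (W k \<omega>) = \<sigma> k} \<omega>
            * (v (W i \<omega>) * v (W j \<omega>)) \<partial>M) = 0"
proof -
  \<comment> \<open>Conditional independence trades the event E for the event F \<open>\<supseteq>\<close> E, on which the
    previous lemma applies; if F is null, so is E.\<close>
  define E where "E = {\<omega> \<in> space M. \<forall>k<n. A n k \<omega> = \<alpha> k \<and> S (W k \<omega>) = \<sigma> k}"
  define F where "F = {\<omega> \<in> space M. \<forall>k<n. S (W k \<omega>) = \<sigma> k}"
  define \<phi> where "\<phi> x = v (x i) * v (x j)" for x :: "nat \<Rightarrow> 'w"
  have [measurable]: "\<phi> \<in> borel_measurable (PiM {..<n} (\<lambda>_. borel))"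
  proof -
    have [measurable]: "i \<in> {..<n}" "j \<in> {..<n}" using ij by auto
    show ?thesis unfolding \<phi>_def by measurable
  qed
  have \<phi>_W: "\<phi> (restrict (\<lambda>k. W k \<omega>) {..<n}) = v (W i \<omega>) * v (W j \<omega>)" for \<omega>
    using ij by (simp add: \<phi>_def)
  have "(\<integral>\<omega>. indicator E \<omega> * (v (W i \<omega>) * v (W j \<omega>)) \<partial>M) * prob F
      = (\<integral>\<omega>. indicator F \<omega> * (v (W i \<omega>) * v (W j \<omega>)) \<partial>M) * prob E"
    using cond_indep_integral[of \<phi> n \<alpha> \<sigma>] by (simp add: E_def F_def \<phi>_W)
  also have "(\<integral>\<omega>. indicator F \<omega> * (v (W i \<omega>) * v (W j \<omega>)) \<partial>M) = 0"
    unfolding F_def by (rule integral_stratum_pattern_product_zero[OF assms])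
  finally have E_zero: "(\<integral>\<omega>. indicator E \<omega> * (v (W i \<omega>) * v (W j \<omega>)) \<partial>M) * prob F = 0"
    by simp
  show ?thesis
    unfolding E_def[symmetric]
  proof (cases "prob F = 0")
    case True
    have "F \<in> events" unfolding F_def by measurable
    with True have "AE \<omega> in M. \<omega> \<notin> F"
      by (intro AE_not_in) (simp add: null_sets_def emeasure_eq_measure)
    then have "AE \<omega> in M. indicator E \<omega> * (v (W i \<omega>) * v (W j \<omega>)) = 0"
      by eventually_elim (auto simp: E_def F_def indicator_def)
    then show "(\<integral>\<omega>. indicator E \<omega> * (v (W i \<omega>) * v (W j \<omega>)) \<partial>M) = 0"
      by (simp add: integral_eq_zero_AE)
  qed (use E_zero in simp)
qed

lemma integral_selected_product_zero:
  fixes v :: "'w \<Rightarrow> real"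
  assumes [measurable]: "v \<in> borel_measurable borel" and bounded: "\<And>w. \<bar>v w\<bar> \<le> C"
    and centered: "(\<integral>\<omega>. v (W 0 \<omega>) \<partial>M) = 0" and supp: "\<And>w. v w \<noteq> 0 \<Longrightarrow> S w = s"
    and ij: "i < n" "j < n" "i \<noteq> j"
  shows "(\<integral>\<omega>. (if A n i \<omega> = a then v (W i \<omega>) else 0) * (if A n j \<omega> = a then v (W j \<omega>) else 0) \<partial>M) = 0"
proof -
  \<comment> \<open>Split according to the (finitely many) values of the assignment and stratum vectors.\<close>
  define P where "P = ({..<n} \<rightarrow>\<^sub>E {0, 1::nat}) \<times> ({..<n} \<rightarrow>\<^sub>E {1..Sc})"
  define E where "E \<alpha> \<sigma> = {\<omega> \<in> space M. \<forall>k<n. A n k \<omega> = \<alpha> k \<and> S (W k \<omega>) = \<sigma> k}" for \<alpha> \<sigma>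
  define f where "f \<alpha> \<sigma> \<omega> = of_bool (\<alpha> i = a \<and> \<alpha> j = a) * (indicator (E \<alpha> \<sigma>) \<omega> * (v (W i \<omega>) * v (W j \<omega>)))"
    for \<alpha> \<sigma> \<omega>
  have "finite P" unfolding P_def by (simp add: finite_PiE)
  have decompose: "(if A n i \<omega> = a then v (W i \<omega>) else 0) * (if A n j \<omega> = a then v (W j \<omega>) else 0)
      = (\<Sum>(\<alpha>, \<sigma>)\<in>P. f \<alpha> \<sigma> \<omega>)" if "\<omega> \<in> space M" for \<omega>
  proof -
    define p where "p = (restrict (\<lambda>k. A n k \<omega>) {..<n}, restrict (\<lambda>k. S (W k \<omega>)) {..<n})"
    have "p \<in> P" using A_bin S_range by (auto simp: P_def p_def)
    have "indicator (E \<alpha> \<sigma>) \<omega> = (of_bool ((\<alpha>, \<sigma>) = p) :: real)" if "(\<alpha>, \<sigma>) \<in> P" for \<alpha> \<sigma>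
    proof -
      have "restrict \<alpha> {..<n} = \<alpha>" "restrict \<sigma> {..<n} = \<sigma>"
        using that by (auto simp: P_def PiE_def extensional_restrict)
      then have "(\<alpha>, \<sigma>) = p \<longleftrightarrow> restrict \<alpha> {..<n} = restrict (\<lambda>k. A n k \<omega>) {..<n}
                                \<and> restrict \<sigma> {..<n} = restrict (\<lambda>k. S (W k \<omega>)) {..<n}"
        by (simp add: p_def)
      then show ?thesis
        using \<open>\<omega> \<in> space M\<close> unfolding restrict_eq_restrict_iff by (auto simp: E_def indicator_def)
    qed
    then have "(\<Sum>(\<alpha>, \<sigma>)\<in>P. f \<alpha> \<sigma> \<omega>) = (\<Sum>q\<in>P. if q = p then f (fst q) (snd q) \<omega> else 0)"
      by (intro sum.cong) (auto simp: f_def)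
    also have "\<dots> = f (fst p) (snd p) \<omega>"
      using \<open>p \<in> P\<close> \<open>finite P\<close> by (simp add: sum.delta')
    also have "\<dots> = (if A n i \<omega> = a then v (W i \<omega>) else 0) * (if A n j \<omega> = a then v (W j \<omega>) else 0)"
      using \<open>\<omega> \<in> space M\<close> ij by (simp add: f_def p_def E_def)
    finally show ?thesis ..
  qed
  have f_int: "integrable M (f \<alpha> \<sigma>)" for \<alpha> \<sigma>
  proof (rule integrable_const_bound[where B="C * C"])
    show "AE \<omega> in M. norm (f \<alpha> \<sigma> \<omega>) \<le> C * C"
      using bounded order.trans[OF abs_ge_zero bounded]
      by (intro AE_I2) (auto simp: f_def abs_mult indicator_def intro: mult_mono)
    show "f \<alpha> \<sigma> \<in> borel_measurable M"
      unfolding f_def E_def by measurable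
  qed
  have "(\<integral>\<omega>. (if A n i \<omega> = a then v (W i \<omega>) else 0) * (if A n j \<omega> = a then v (W j \<omega>) else 0) \<partial>M)
      = (\<integral>\<omega>. (\<Sum>(\<alpha>, \<sigma>)\<in>P. f \<alpha> \<sigma> \<omega>) \<partial>M)"
    by (rule Bochner_Integration.integral_cong) (simp_all add: decompose)
  also have "\<dots> = (\<Sum>(\<alpha>, \<sigma>)\<in>P. \<integral>\<omega>. f \<alpha> \<sigma> \<omega> \<partial>M)"
    unfolding case_prod_beta using f_int by (rule Bochner_Integration.integral_sum)
  also have "\<dots> = 0"
    using integral_assignment_pattern_product_zero[OF assms]
    by (intro sum.neutral) (auto simp: f_def E_def)
  finally show ?thesis .
qed

definition selected_average :: "nat \<Rightarrow> ('w \<Rightarrow> 'b::real_vector) \<Rightarrow> nat \<Rightarrow> 'a \<Rightarrow> 'b" where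
  "selected_average a f n \<omega> = (1 / real n) *\<^sub>R (\<Sum>i<n. if A n i \<omega> = a then f (W i \<omega>) else 0)"

lemma selected_average_real:
  fixes f :: "'w \<Rightarrow> real"
  shows "selected_average a f = (\<lambda>n \<omega>. (1 / real n) * (\<Sum>i<n. if A n i \<omega> = a then f (W i \<omega>) else 0))"
  by (simp add: fun_eq_iff selected_average_def)

lemma selected_average_measurable[measurable]:
  fixes f :: "'w \<Rightarrow> 'b::{real_normed_vector, second_countable_topology}"
  assumes [measurable]: "f \<in> borel_measurable borel"
  shows "selected_average a f n \<in> borel_measurable M"
  unfolding selected_average_def by measurable

lemma selected_average_add:
  "selected_average a (\<lambda>w. f w + g w) n \<omega> = selected_average a f n \<omega> + selected_average a g n \<omega>"
  unfolding selected_average_def scaleR_add_right[symmetric] sum.distrib[symmetric]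
  by (intro arg_cong[where f="scaleR _"] sum.cong) auto

lemma selected_average_diff:
  "selected_average a (\<lambda>w. f w - g w) n \<omega> = selected_average a f n \<omega> - selected_average a g n \<omega>"
  unfolding selected_average_def scaleR_diff_right[symmetric] sum_subtractf[symmetric]
  by (intro arg_cong[where f="scaleR _"] sum.cong) auto

lemma selected_average_sum:
  "selected_average a (\<lambda>w. \<Sum>k\<in>K. f k w) n \<omega> = (\<Sum>k\<in>K. selected_average a (f k) n \<omega>)"
proof -
  have "(if A n i \<omega> = a then \<Sum>k\<in>K. f k (W i \<omega>) else 0) = (\<Sum>k\<in>K. if A n i \<omega> = a then f k (W i \<omega>) else 0)"
    for i by simp
  then show ?thesis
    unfolding selected_average_def scaleR_sum_right[symmetric] by (simp add: sum.swap[of _ K])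
qed

lemma selected_average_linear:
  assumes "linear L"
  shows "L (selected_average a f n \<omega>) = selected_average a (\<lambda>w. L (f w)) n \<omega>"
  unfolding selected_average_def
  by (simp add: linear_scale[OF assms] linear_sum[OF assms] linear_0[OF assms] if_distrib[of L] cong: if_cong)

lemma selected_average_indicator:
  "selected_average a (\<lambda>w. of_bool (S w = s)) n \<omega> = real (N_as A W S n a s \<omega>) / real n"
proof -
  have "(if A n i \<omega> = a then of_bool (S (W i \<omega>) = s) else 0) = (of_bool (A n i \<omega> = a \<and> S (W i \<omega>) = s) :: real)"
    for i by simp
  then show ?thesis
    by (simp add: selected_average_def N_as_def card_less_eq_sum_of_bool)
qed

lemma selected_average_bounded_centered_conv:
  fixes v :: "'w \<Rightarrow> real"
  assumes [measurable]: "v \<in> borel_measurable borel" and bounded: "\<And>w. \<bar>v w\<bar> \<le> C"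
    and centered: "(\<integral>\<omega>. v (W 0 \<omega>) \<partial>M) = 0" and supp: "\<And>w. v w \<noteq> 0 \<Longrightarrow> S w = s"
  shows "conv_in_prob M (selected_average a v) 0"
  unfolding selected_average_real
proof (rule conv_in_prob_average_orthogonal[OF prob_space_axioms, where B=C])
  show "\<bar>if A n i \<omega> = a then v (W i \<omega>) else 0\<bar> \<le> C" for n i \<omega>
    using bounded[of "W i \<omega>"] order.trans[OF abs_ge_zero bounded] by simp
  show "(\<integral>\<omega>. (if A n i \<omega> = a then v (W i \<omega>) else 0) * (if A n j \<omega> = a then v (W j \<omega>) else 0) \<partial>M) = 0"
    if "i < n" "j < n" "i \<noteq> j" for n i j
    by (rule integral_selected_product_zero[OF assms that])
qed measurable

lemma selected_average_abs_integral_le: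
  fixes r :: "'w \<Rightarrow> real"
  assumes [measurable]: "r \<in> borel_measurable borel" and int: "integrable M (\<lambda>\<omega>. r (W 0 \<omega>))"
  shows "integrable M (selected_average a r n)"
    and "(\<integral>\<omega>. \<bar>selected_average a r n \<omega>\<bar> \<partial>M) \<le> (\<integral>\<omega>. \<bar>r (W 0 \<omega>)\<bar> \<partial>M)"
proof -
  have r_int: "integrable M (\<lambda>\<omega>. r (W i \<omega>))" for i
    using integrable_W[of r i] int by simp
  have term_int: "integrable M (\<lambda>\<omega>. if A n i \<omega> = a then r (W i \<omega>) else 0)" for i
    by (rule Bochner_Integration.integrable_bound[OF r_int]) auto
  then show "integrable M (selected_average a r n)"
    by (simp add: selected_average_real)
  have pointwise: "\<bar>selected_average a r n \<omega>\<bar> \<le> (1 / real n) * (\<Sum>i<n. \<bar>r (W i \<omega>)\<bar>)" for \<omega>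
  proof -
    have "\<bar>\<Sum>i<n. if A n i \<omega> = a then r (W i \<omega>) else 0\<bar> \<le> (\<Sum>i<n. \<bar>r (W i \<omega>)\<bar>)"
      by (rule order.trans[OF sum_abs sum_mono]) auto
    then show ?thesis by (simp add: selected_average_real abs_mult divide_right_mono)
  qed
  have "(\<integral>\<omega>. \<bar>selected_average a r n \<omega>\<bar> \<partial>M) \<le> (\<integral>\<omega>. (1 / real n) * (\<Sum>i<n. \<bar>r (W i \<omega>)\<bar>) \<partial>M)"
    using pointwise term_int r_int by (intro integral_mono) (auto simp: selected_average_real)
  also have "\<dots> = (1 / real n) * (\<Sum>i<n. \<integral>\<omega>. \<bar>r (W i \<omega>)\<bar> \<partial>M)"
    using r_int by simp
  also have "\<dots> = (1 / real n) * (\<Sum>i<n. \<integral>\<omega>. \<bar>r (W 0 \<omega>)\<bar> \<partial>M)"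
    by (intro arg_cong[where f="\<lambda>x. (1 / real n) * x"] sum.cong refl integral_W) measurable
  also have "\<dots> \<le> (\<integral>\<omega>. \<bar>r (W 0 \<omega>)\<bar> \<partial>M)"
    by (cases "n = 0") auto
  finally show "(\<integral>\<omega>. \<bar>selected_average a r n \<omega>\<bar> \<partial>M) \<le> (\<integral>\<omega>. \<bar>r (W 0 \<omega>)\<bar> \<partial>M)" .
qed

lemma selected_average_centered_conv:
  fixes u :: "'w \<Rightarrow> real"
  assumes [measurable]: "u \<in> borel_measurable borel" and int: "integrable M (\<lambda>\<omega>. u (W 0 \<omega>))"
    and centered: "(\<integral>\<omega>. u (W 0 \<omega>) \<partial>M) = 0" and supp: "\<And>w. u w \<noteq> 0 \<Longrightarrow> S w = s"
  shows "conv_in_prob M (selected_average a u) 0"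
proof (rule conv_in_prob_zero_if_L1_approx[OF prob_space_axioms])
  \<comment> \<open>Approximate u in L1 by a bounded centred v on the same stratum; the arm means of v are
    handled by Chebyshev, and those of u - v are small in L1 uniformly in n.\<close>
  fix \<eta> :: real assume "0 < \<eta>"
  have D: "{w. S w = s} \<in> sets borel" by measurable
  have supp_D: "u w \<noteq> 0 \<Longrightarrow> w \<in> {w. S w = s}" for w using supp by simp
  obtain v B where [measurable]: "v \<in> borel_measurable borel" and v_bounded: "\<And>w. \<bar>v w\<bar> \<le> B"
    and v_supp: "\<And>w. v w \<noteq> 0 \<Longrightarrow> w \<in> {w. S w = s}" and v_centered: "(\<integral>\<omega>. v (W 0 \<omega>) \<partial>M) = 0"
    and L1: "(\<integral>\<omega>. \<bar>u (W 0 \<omega>) - v (W 0 \<omega>)\<bar> \<partial>M) \<le> \<eta>"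
    using centered_bounded_approximation[OF prob_space_axioms W_meas assms(1) D supp_D int centered \<open>0 < \<eta>\<close>]
    by blast
  have "integrable M (\<lambda>\<omega>. v (W 0 \<omega>))"
    by (rule integrable_const_bound[where B=B]) (use v_bounded in simp_all)
  with int have uv_int: "integrable M (\<lambda>\<omega>. u (W 0 \<omega>) - v (W 0 \<omega>))"
    by (rule Bochner_Integration.integrable_diff)
  have "(\<lambda>w. u w - v w) \<in> borel_measurable borel" by measurable
  note uv_average = selected_average_abs_integral_le[OF this uv_int, of a]
  show "\<exists>Y. conv_in_prob M Y 0 \<and> (\<forall>n. Y n \<in> borel_measurable M
      \<and> integrable M (\<lambda>\<omega>. selected_average a u n \<omega> - Y n \<omega>)
      \<and> (\<integral>\<omega>. \<bar>selected_average a u n \<omega> - Y n \<omega>\<bar> \<partial>M) \<le> \<eta>)"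
  proof (intro exI conjI allI)
    show "conv_in_prob M (selected_average a v) 0"
      by (rule selected_average_bounded_centered_conv[OF _ v_bounded v_centered]) (use v_supp in auto)
    fix n
    show "selected_average a v n \<in> borel_measurable M" by measurable
    show "integrable M (\<lambda>\<omega>. selected_average a u n \<omega> - selected_average a v n \<omega>)"
      using uv_average(1) unfolding selected_average_diff[symmetric] .
    show "(\<integral>\<omega>. \<bar>selected_average a u n \<omega> - selected_average a v n \<omega>\<bar> \<partial>M) \<le> \<eta>"
      unfolding selected_average_diff[symmetric] using uv_average(2) L1 by (rule order.trans)
  qed
qed measurable

lemma selected_average_stratum_conv:
  fixes \<phi> :: "'w \<Rightarrow> real"
  assumes [measurable]: "\<phi> \<in> borel_measurable borel" and int: "integrable M (\<lambda>\<omega>. \<phi> (W 0 \<omega>))"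
    and supp: "\<And>w. \<phi> w \<noteq> 0 \<Longrightarrow> S w = s"
    and arm: "conv_in_prob M (\<lambda>n \<omega>. real (N_as A W S n a s \<omega>) / real n) (\<rho> * stratum_prob s)"
  shows "conv_in_prob M (selected_average a \<phi>) (\<rho> * (\<integral>\<omega>. \<phi> (W 0 \<omega>) \<partial>M))"
proof -
  \<comment> \<open>\<open>\<phi> = u + q \<cdot> 1{S = s}\<close> with u centred, so the arm mean of \<open>\<phi>\<close> is that of u plus q times
    the arm frequency of stratum s.\<close>
  define m where "m = (\<integral>\<omega>. \<phi> (W 0 \<omega>) \<partial>M)"
  define q where "q = m / stratum_prob s"
  define u where "u w = \<phi> w - q * of_bool (S w = s)" for w
  have [measurable]: "u \<in> borel_measurable borel"
    unfolding u_def by measurable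
  have "{w. S w = s} \<in> sets borel" by measurable
  from integral_supported_divide_measure_cancel[OF finite_measure_axioms W_meas this, of \<phi>] supp
  have qp: "q * stratum_prob s = m"
    unfolding q_def m_def stratum_prob_def by simp
  have ind_int: "integrable M (\<lambda>\<omega>. of_bool (S (W 0 \<omega>) = s) :: real)"
    by (rule integrable_const_bound[where B=1]) auto
  have "(\<integral>\<omega>. of_bool (S (W 0 \<omega>) = s) \<partial>M) = stratum_prob s"
    by (rule integral_stratum_indicator)
  then have u_centered: "(\<integral>\<omega>. u (W 0 \<omega>) \<partial>M) = 0"
    using int ind_int qp by (simp add: u_def m_def)
  have u_int: "integrable M (\<lambda>\<omega>. u (W 0 \<omega>))"
    using int ind_int by (simp add: u_def)
  have u_supp: "u w \<noteq> 0 \<Longrightarrow> S w = s" for w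
    using supp[of w] by (cases "S w = s") (auto simp: u_def)
  have decompose: "selected_average a \<phi> n \<omega>
      = selected_average a u n \<omega> + q *\<^sub>R (real (N_as A W S n a s \<omega>) / real n)" for n \<omega>
  proof -
    have "selected_average a \<phi> n \<omega> = selected_average a (\<lambda>w. u w + q * of_bool (S w = s)) n \<omega>"
      by (simp add: u_def)
    also have "\<dots> = selected_average a u n \<omega> + q * selected_average a (\<lambda>w. of_bool (S w = s)) n \<omega>"
      by (simp add: selected_average_add selected_average_linear[OF linear_times])
    finally show ?thesis
      by (simp add: selected_average_indicator)
  qed
  have limit: "0 + q *\<^sub>R (\<rho> * stratum_prob s) = \<rho> * m"
    using qp by (simp add: mult.left_commute)
  have "conv_in_prob M (\<lambda>n \<omega>. selected_average a u n \<omega> + q *\<^sub>R (real (N_as A W S n a s \<omega>) / real n)) (\<rho> * m)"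
    unfolding limit[symmetric]
    by (rule conv_in_prob_add[OF prob_space_axioms selected_average_centered_conv[OF _ u_int u_centered u_supp]
          conv_in_prob_scaleR[OF prob_space_axioms arm]])
       measurable
  then show ?thesis
    unfolding decompose[symmetric] m_def .
qed

lemma integrable_stratum_weighted:
  fixes \<phi> :: "'w \<Rightarrow> 'b::{banach, second_countable_topology}"
  assumes [measurable]: "\<phi> \<in> borel_measurable borel" and int: "integrable M (\<lambda>\<omega>. \<phi> (W 0 \<omega>))"
  shows "integrable M (\<lambda>\<omega>. \<rho> (S (W 0 \<omega>)) *\<^sub>R \<phi> (W 0 \<omega>))"
proof (rule Bochner_Integration.integrable_bound)
  show "integrable M (\<lambda>\<omega>. (\<Sum>s\<in>{1..Sc}. \<bar>\<rho> s\<bar>) *\<^sub>R \<phi> (W 0 \<omega>))"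
    using int by simp
  have "\<bar>\<rho> (S w)\<bar> \<le> (\<Sum>s\<in>{1..Sc}. \<bar>\<rho> s\<bar>)" for w
    using S_range[of w] by (intro member_le_sum) auto
  then show "AE \<omega> in M. norm (\<rho> (S (W 0 \<omega>)) *\<^sub>R \<phi> (W 0 \<omega>))
      \<le> norm ((\<Sum>s\<in>{1..Sc}. \<bar>\<rho> s\<bar>) *\<^sub>R \<phi> (W 0 \<omega>))"
    by (intro AE_I2) (simp add: mult_right_mono)
qed measurable

lemma selected_average_conv_real:
  fixes \<phi> :: "'w \<Rightarrow> real"
  assumes [measurable]: "\<phi> \<in> borel_measurable borel" and int: "integrable M (\<lambda>\<omega>. \<phi> (W 0 \<omega>))"
    and arm: "\<And>s. s \<in> {1..Sc} \<Longrightarrow>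
      conv_in_prob M (\<lambda>n \<omega>. real (N_as A W S n a s \<omega>) / real n) (\<rho> s * stratum_prob s)"
  shows "conv_in_prob M (selected_average a \<phi>) (\<integral>\<omega>. \<rho> (S (W 0 \<omega>)) * \<phi> (W 0 \<omega>) \<partial>M)"
proof -
  define \<phi>\<^sub>s where "\<phi>\<^sub>s s w = of_bool (S w = s) * \<phi> w" for s w
  have [measurable]: "\<phi>\<^sub>s s \<in> borel_measurable borel" for s
    unfolding \<phi>\<^sub>s_def by measurable
  have \<phi>\<^sub>s_int: "integrable M (\<lambda>\<omega>. \<phi>\<^sub>s s (W 0 \<omega>))" for s
    by (rule Bochner_Integration.integrable_bound[OF int]) (auto simp: \<phi>\<^sub>s_def)
  have strata: "(\<Sum>s\<in>{1..Sc}. c s * \<phi>\<^sub>s s w) = c (S w) * \<phi> w" for c w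
  proof -
    have "(\<Sum>s\<in>{1..Sc}. c s * \<phi>\<^sub>s s w) = (\<Sum>s\<in>{1..Sc}. if s = S w then c (S w) * \<phi> w else 0)"
      by (intro sum.cong) (auto simp: \<phi>\<^sub>s_def)
    also have "\<dots> = c (S w) * \<phi> w"
      using S_range[of w] by (simp add: sum.delta)
    finally show ?thesis .
  qed
  have "conv_in_prob M (\<lambda>n \<omega>. \<Sum>s\<in>{1..Sc}. selected_average a (\<phi>\<^sub>s s) n \<omega>)
      (\<Sum>s\<in>{1..Sc}. \<rho> s * (\<integral>\<omega>. \<phi>\<^sub>s s (W 0 \<omega>) \<partial>M))"
  proof (rule conv_in_prob_sum[OF prob_space_axioms])
    show "conv_in_prob M (selected_average a (\<phi>\<^sub>s s)) (\<rho> s * (\<integral>\<omega>. \<phi>\<^sub>s s (W 0 \<omega>) \<partial>M))"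
      if "s \<in> {1..Sc}" for s
      by (rule selected_average_stratum_conv[OF _ \<phi>\<^sub>s_int _ arm[OF that]]) (auto simp: \<phi>\<^sub>s_def)
  qed measurable
  moreover have "(\<Sum>s\<in>{1..Sc}. selected_average a (\<phi>\<^sub>s s) n \<omega>) = selected_average a \<phi> n \<omega>" for n \<omega>
    using strata[of "\<lambda>_. 1"] by (simp add: selected_average_sum[symmetric])
  moreover have "(\<Sum>s\<in>{1..Sc}. \<rho> s * (\<integral>\<omega>. \<phi>\<^sub>s s (W 0 \<omega>) \<partial>M)) = (\<integral>\<omega>. \<rho> (S (W 0 \<omega>)) * \<phi> (W 0 \<omega>) \<partial>M)"
  proof -
    have "(\<Sum>s\<in>{1..Sc}. \<rho> s * (\<integral>\<omega>. \<phi>\<^sub>s s (W 0 \<omega>) \<partial>M))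
        = (\<integral>\<omega>. (\<Sum>s\<in>{1..Sc}. \<rho> s * \<phi>\<^sub>s s (W 0 \<omega>)) \<partial>M)"
      using \<phi>\<^sub>s_int by (simp add: Bochner_Integration.integral_sum)
    then show ?thesis by (simp only: strata)
  qed
  ultimately show ?thesis by simp
qed

lemma selected_average_conv:
  fixes \<phi> :: "'w \<Rightarrow> 'b::euclidean_space"
  assumes [measurable]: "\<phi> \<in> borel_measurable borel" and int: "integrable M (\<lambda>\<omega>. \<phi> (W 0 \<omega>))"
    and arm: "\<And>s. s \<in> {1..Sc} \<Longrightarrow>
      conv_in_prob M (\<lambda>n \<omega>. real (N_as A W S n a s \<omega>) / real n) (\<rho> s * stratum_prob s)"
  shows "conv_in_prob M (selected_average a \<phi>) (\<integral>\<omega>. \<rho> (S (W 0 \<omega>)) *\<^sub>R \<phi> (W 0 \<omega>) \<partial>M)"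
proof (rule conv_in_prob_componentwise[OF prob_space_axioms])
  fix b :: 'b
  have inner_b: "linear (\<lambda>x::'b. x \<bullet> b)"
    by (rule bounded_linear_inner_left[THEN bounded_linear.linear])
  have "conv_in_prob M (selected_average a (\<lambda>w. \<phi> w \<bullet> b)) (\<integral>\<omega>. \<rho> (S (W 0 \<omega>)) * (\<phi> (W 0 \<omega>) \<bullet> b) \<partial>M)"
    by (rule selected_average_conv_real[OF _ _ arm]) (use int in simp_all)
  moreover have "(\<integral>\<omega>. (\<rho> (S (W 0 \<omega>)) *\<^sub>R \<phi> (W 0 \<omega>)) \<bullet> b \<partial>M)
      = (\<integral>\<omega>. \<rho> (S (W 0 \<omega>)) *\<^sub>R \<phi> (W 0 \<omega>) \<partial>M) \<bullet> b"
    using integrable_stratum_weighted[OF _ int, of \<rho>] by (intro integral_inner_left) simp_all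
  ultimately show "conv_in_prob M (\<lambda>n \<omega>. selected_average a \<phi> n \<omega> \<bullet> b)
      ((\<integral>\<omega>. \<rho> (S (W 0 \<omega>)) *\<^sub>R \<phi> (W 0 \<omega>) \<partial>M) \<bullet> b)"
    by (simp add: selected_average_linear[OF inner_b])
qed measurable

lemma average_eq_sum_selected_average:
  "(1 / real n) *\<^sub>R (\<Sum>i<n. g (A n i \<omega>) (W i \<omega>)) = (\<Sum>a\<in>{0, 1}. selected_average a (g a) n \<omega>)"
proof -
  have "g (A n i \<omega>) (W i \<omega>) = (\<Sum>a\<in>{0, 1}. if A n i \<omega> = a then g a (W i \<omega>) else 0)" for i
    using A_bin[of n i \<omega>] by auto
  then show ?thesis
    unfolding selected_average_def by (simp only: scaleR_sum_right) (rule sum.swap)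
qed

lemma treatment_average_conv:
  fixes g :: "nat \<Rightarrow> 'w \<Rightarrow> 'b::euclidean_space"
  assumes g_meas: "\<And>a. a \<in> {0, 1} \<Longrightarrow> g a \<in> borel_measurable borel"
    and g_int: "\<And>a. a \<in> {0, 1} \<Longrightarrow> integrable M (\<lambda>\<omega>. g a (W 0 \<omega>))"
    and balance: "\<And>s. s \<in> {1..Sc} \<Longrightarrow>
      conv_in_prob M (\<lambda>n \<omega>. real (N_as A W S n 1 s \<omega>) / real (N_s W S n s \<omega>)) (\<pi> s)"
  shows "conv_in_prob M (\<lambda>n \<omega>. (1 / real n) *\<^sub>R (\<Sum>i<n. g (A n i \<omega>) (W i \<omega>)))
           (\<integral>\<omega>. \<pi> (S (W 0 \<omega>)) *\<^sub>R g 1 (W 0 \<omega>) + (1 - \<pi> (S (W 0 \<omega>))) *\<^sub>R g 0 (W 0 \<omega>) \<partial>M)"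
proof -
  define \<pi>\<^sub>a where "\<pi>\<^sub>a a s = (if a = (1::nat) then \<pi> s else 1 - \<pi> s)" for a s
  have "conv_in_prob M (\<lambda>n \<omega>. \<Sum>a\<in>{0, 1}. selected_average a (g a) n \<omega>)
      (\<Sum>a\<in>{0, 1}. \<integral>\<omega>. \<pi>\<^sub>a a (S (W 0 \<omega>)) *\<^sub>R g a (W 0 \<omega>) \<partial>M)"
  proof (rule conv_in_prob_sum[OF prob_space_axioms])
    fix a :: nat assume a: "a \<in> {0, 1}"
    show "conv_in_prob M (selected_average a (g a)) (\<integral>\<omega>. \<pi>\<^sub>a a (S (W 0 \<omega>)) *\<^sub>R g a (W 0 \<omega>) \<partial>M)"
    proof (rule selected_average_conv[OF g_meas[OF a] g_int[OF a]])
      show "conv_in_prob M (\<lambda>n \<omega>. real (N_as A W S n a s \<omega>) / real n) (\<pi>\<^sub>a a s * stratum_prob s)"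
        if "s \<in> {1..Sc}" for s
        using arm_frequency_conv[OF balance[OF that]] a by (auto simp: \<pi>\<^sub>a_def)
    qed
    fix n
    show "selected_average a (g a) n \<in> borel_measurable M"
      using g_meas[OF a] by measurable
  qed simp
  moreover have "(\<Sum>a\<in>{0, 1}. \<integral>\<omega>. \<pi>\<^sub>a a (S (W 0 \<omega>)) *\<^sub>R g a (W 0 \<omega>) \<partial>M)
      = (\<integral>\<omega>. \<pi> (S (W 0 \<omega>)) *\<^sub>R g 1 (W 0 \<omega>) + (1 - \<pi> (S (W 0 \<omega>))) *\<^sub>R g 0 (W 0 \<omega>) \<partial>M)"
    using integrable_stratum_weighted[OF g_meas[of 1] g_int[of 1], where \<rho>=\<pi>]
      integrable_stratum_weighted[OF g_meas[of 0] g_int[of 0], where \<rho>="\<lambda>s. 1 - \<pi> s"]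
    by (simp add: \<pi>\<^sub>a_def Bochner_Integration.integral_add add.commute)
  ultimately show ?thesis
    by (simp only: average_eq_sum_selected_average)
qed

end

lemma borel_measurable_arm_outcome:
  fixes h :: "real \<Rightarrow> nat \<Rightarrow> 'z::topological_space \<Rightarrow> 'b::topological_space"
  assumes "(\<lambda>(y, z). h y a z) \<in> borel_measurable borel"
  shows "(\<lambda>w::real \<times> real \<times> 'z. h (if a = 1 then fst (snd w) else fst w) a (snd (snd w)))
           \<in> borel_measurable borel"
proof -
  have "(\<lambda>w::real \<times> real \<times> 'z. (if a = 1 then fst (snd w) else fst w, snd (snd w))) \<in> borel_measurable borel"
    by (intro borel_measurable_continuous_onI) (cases "a = 1"; simp; intro continuous_intros)
  from measurable_comp[OF this assms] show ?thesis
    by (simp add: comp_def)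
qed

theorem lemma10:
  fixes M :: "'a measure"
    and Y0 Y1 :: "nat \<Rightarrow> 'a \<Rightarrow> real"
    and Z :: "nat \<Rightarrow> 'a \<Rightarrow> real ^ 'k"
    and A :: "nat \<Rightarrow> nat \<Rightarrow> 'a \<Rightarrow> nat"
    and Sf :: "real ^ 'k \<Rightarrow> nat"
    and Sc :: nat
    and \<pi> :: "nat \<Rightarrow> real"
    and h :: "real \<Rightarrow> nat \<Rightarrow> real ^ 'k \<Rightarrow> real ^ 'j"
  assumes M: "prob_space M"
    and W_meas: "\<And>i. (\<lambda>\<omega>. (Y0 i \<omega>, Y1 i \<omega>, Z i \<omega>)) \<in> borel_measurable M"
    and W_indep: "prob_space.indep_vars M (\<lambda>_. borel) (\<lambda>i \<omega>. (Y0 i \<omega>, Y1 i \<omega>, Z i \<omega>)) UNIV"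
    and W_ident: "\<And>i. distr M borel (\<lambda>\<omega>. (Y0 i \<omega>, Y1 i \<omega>, Z i \<omega>))
                        = distr M borel (\<lambda>\<omega>. (Y0 0 \<omega>, Y1 0 \<omega>, Z 0 \<omega>))"
    and Y0_sq: "integrable M (\<lambda>\<omega>. (Y0 0 \<omega>)\<^sup>2)"
    and Y1_sq: "integrable M (\<lambda>\<omega>. (Y1 0 \<omega>)\<^sup>2)"
    and Sf_meas: "Sf \<in> borel \<rightarrow>\<^sub>M count_space UNIV"
    and Sf_range: "\<And>z. Sf z \<in> {1..Sc}"
    and \<pi>_range: "\<And>s. s \<in> {1..Sc} \<Longrightarrow> 0 < \<pi> s \<and> \<pi> s < 1"
    and A_meas: "\<And>n i. A n i \<in> M \<rightarrow>\<^sub>M count_space UNIV"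
    and A_bin: "\<And>n i \<omega>. A n i \<omega> \<in> {0, 1}"
    and cond_indep: "\<And>n. cond_indep_strata M n (\<lambda>i \<omega>. (Y0 i \<omega>, Y1 i \<omega>, Z i \<omega>))
                             (A n) (\<lambda>i \<omega>. Sf (Z i \<omega>))"
    and balance: "\<And>s. s \<in> {1..Sc} \<Longrightarrow>
          conv_in_prob M (\<lambda>n \<omega>. real (N_as A Z Sf n 1 s \<omega>) / real (N_s Z Sf n s \<omega>)) (\<pi> s)"
    and h_meas: "\<And>a. a \<in> {0, 1} \<Longrightarrow> (\<lambda>(y, z). h y a z) \<in> borel_measurable borel"
    and h_int: "\<And>a. a \<in> {0, 1} \<Longrightarrow>
          integrable M (\<lambda>\<omega>. h (if a = 1 then Y1 0 \<omega> else Y0 0 \<omega>) a (Z 0 \<omega>))"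
  shows "conv_in_prob M
           (\<lambda>n \<omega>. (1 / real n) *\<^sub>R
              (\<Sum>i<n. h (Y1 i \<omega> * real (A n i \<omega>) + Y0 i \<omega> * (1 - real (A n i \<omega>)))
                         (A n i \<omega>) (Z i \<omega>)))
           (integral\<^sup>L M (\<lambda>\<omega>. \<pi> (Sf (Z 0 \<omega>)) *\<^sub>R h (Y1 0 \<omega>) 1 (Z 0 \<omega>)
                             + (1 - \<pi> (Sf (Z 0 \<omega>))) *\<^sub>R h (Y0 0 \<omega>) 0 (Z 0 \<omega>)))"
proof -
  define W where "W = (\<lambda>i \<omega>. (Y0 i \<omega>, Y1 i \<omega>, Z i \<omega>))"
  define Sw where "Sw = (\<lambda>w :: real \<times> real \<times> (real ^ 'k). Sf (snd (snd w)))"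
  define g where "g = (\<lambda>a (w :: real \<times> real \<times> (real ^ 'k)).
    h (if a = 1 then fst (snd w) else fst w) a (snd (snd w)))"
  have "Sw \<in> borel \<rightarrow>\<^sub>M count_space UNIV"
    unfolding Sw_def
    by (rule measurable_compose[OF _ Sf_meas]) (intro borel_measurable_continuous_onI continuous_intros)
  then interpret stratified_assignment M W Sw Sc A
    using assms unfolding stratified_assignment_def stratified_assignment_axioms_def
    by (simp add: W_def Sw_def)
  have counts: "N_as A W Sw = N_as A Z Sf" "N_s W Sw = N_s Z Sf"
    by (simp_all add: fun_eq_iff N_as_def N_s_def W_def Sw_def)
  have "conv_in_prob M (\<lambda>n \<omega>. (1 / real n) *\<^sub>R (\<Sum>i<n. g (A n i \<omega>) (W i \<omega>)))
      (\<integral>\<omega>. \<pi> (Sw (W 0 \<omega>)) *\<^sub>R g 1 (W 0 \<omega>) + (1 - \<pi> (Sw (W 0 \<omega>))) *\<^sub>R g 0 (W 0 \<omega>) \<partial>M)"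
  proof (rule treatment_average_conv)
    show "g a \<in> borel_measurable borel" if "a \<in> {0, 1}" for a
      using borel_measurable_arm_outcome[where h=h and a=a, OF h_meas[OF that]] by (simp add: g_def)
    show "integrable M (\<lambda>\<omega>. g a (W 0 \<omega>))" if "a \<in> {0, 1}" for a
      using h_int[OF that] unfolding g_def W_def fst_conv snd_conv .
  qed (use balance in \<open>simp add: counts\<close>)
  moreover have "g (A n i \<omega>) (W i \<omega>)
      = h (Y1 i \<omega> * real (A n i \<omega>) + Y0 i \<omega> * (1 - real (A n i \<omega>))) (A n i \<omega>) (Z i \<omega>)" for n i \<omega>
    using A_bin[of n i \<omega>] by (auto simp: g_def W_def)
  ultimately show ?thesis
    by (simp add: g_def W_def Sw_def)
qed

end
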